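(* Let $(\mathcal{H},\langle\cdot,\cdot\rangle)$ be a separable Hilbert space of dimension $N\in\mathbb{N}\cup\{\infty\}$, and set $\mathbb{K}=\{1,\dots,N\}$ if $N<\infty$ and $\mathbb{K}=\mathbb{N}$ if $N=\infty$. Let $\mathsf{H}$ be a quasi-self-adjoint operator in $\mathcal{H}$ with purely real, simple, discrete spectrum, whose eigenfunctions $\{\psi_n\}_{n\in\mathbb{K}}$ form a basis of $\mathcal{H}$ quadratically close to some orthonormal basis $\{\chi_n\}_{n\in\mathbb{K}}$ (i.e. $\sum_n\|\psi_n-\chi_n\|^2<\infty$). Let $\{\phi_n\}_{n\in\mathbb{K}}$ be the eigenfunctions of $\mathsf{H}^*$, normalised so that $\langle\psi_m,\phi_n\rangle=\delta_{nm}$ and $\|\phi_n\|=1$. Define the set $$\mathfrak{C}:=\Big\{\sum_{n\in\mathbb{K}}\big[1+\alpha_n\big]\langle\phi_n,\cdot\rangle\phi_n:\ \alpha\in\ell^2(\mathbb{K};[-1,\infty))\Big\}.$$ Then the minimisation problem $\inf_{\Theta\in\mathfrak{C}}\|\Theta-\mathsf{I}\|_2$ has a unique minimiser $\Theta_\star\in\mathfrak{C}$.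
   Context: The inner product is linear in the second entry; sums over $\mathbb{K}$ are understood as strong limits when $N=\infty$. $\|\cdot\|_2$ denotes the Hilbert–Schmidt norm, $\|\mathsf{T}\|_2^2=\operatorname{Tr}(\mathsf{T}^*\mathsf{T})$. An operator $\mathsf{H}$ is quasi-self-adjoint if it is densely defined and there is a bounded, non-negative self-adjoint $\Theta$ with bounded inverse such that $\mathsf{H}^*=\Theta\mathsf{H}\Theta^{-1}$ (such $\Theta$ is called a metric for $\mathsf{H}$). A basis means every vector has a unique (norm-convergent) expansion in it. Simple spectrum: all eigenvalues have geometric and algebraic multiplicity one; discrete: compact resolvent. *)

theory Defs
  imports "HOL-Analysis.Analysis"
begin

text \<open>Isabelle/HOL-Analysis only provides real inner product spaces. We introduce
complex vector spaces and complex inner product spaces (inner product conjugate-linear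
in the first and linear in the second entry). The real inner product and the norm are
tied to the complex one by Re, so the topology, norm and completeness are the usual ones.\<close>

class complex_vector = real_vector +
  fixes scaleC :: "complex \<Rightarrow> 'a \<Rightarrow> 'a" (infixr \<open>*\<^sub>C\<close> 75)
  assumes scaleC_add_right: "a *\<^sub>C (x + y) = a *\<^sub>C x + a *\<^sub>C y"
    and scaleC_add_left: "(a + b) *\<^sub>C x = a *\<^sub>C x + b *\<^sub>C x"
    and scaleC_scaleC: "a *\<^sub>C (b *\<^sub>C x) = (a * b) *\<^sub>C x"
    and scaleC_one: "1 *\<^sub>C x = x"
    and scaleR_scaleC: "scaleR r x = (complex_of_real r) *\<^sub>C x"

class complex_inner = complex_vector + real_inner +
  fixes cinner :: "'a \<Rightarrow> 'a \<Rightarrow> complex"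
  assumes cinner_commute: "cinner x y = cnj (cinner y x)"
    and cinner_add_right: "cinner x (y + z) = cinner x y + cinner x z"
    and cinner_scaleC_right: "cinner x (c *\<^sub>C y) = c * cinner x y"
    and Re_cinner: "Re (cinner x y) = inner x y"

text \<open>Consistency check: complex numbers form a complex inner product space.\<close>

instantiation complex :: complex_vector
begin
definition scaleC_complex_def: "scaleC a (x::complex) = a * x"
instance
  by standard (auto simp: scaleC_complex_def algebra_simps scaleR_conv_of_real)
end

instantiation complex :: complex_inner
begin
definition cinner_complex_def: "cinner (x::complex) y = cnj x * y"
instance
  by standard (auto simp: cinner_complex_def scaleC_complex_def inner_complex_def algebra_simps)
end

definition csubspace :: "'a::complex_vector set \<Rightarrow> bool" where
  "csubspace S \<longleftrightarrow> 0 \<in> S \<and> (\<forall>x\<in>S. \<forall>y\<in>S. x + y \<in> S) \<and> (\<forall>c. \<forall>x\<in>S. c *\<^sub>C x \<in> S)"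

definition cspan :: "'a::complex_vector set \<Rightarrow> 'a set" where
  "cspan B = {(\<Sum>b\<in>F. c b *\<^sub>C b) | F c. finite F \<and> F \<subseteq> B}"

definition cbounded_linear :: "('a::complex_inner \<Rightarrow> 'a) \<Rightarrow> bool" where
  "cbounded_linear T \<longleftrightarrow> (\<forall>x y. T (x + y) = T x + T y) \<and> (\<forall>c x. T (c *\<^sub>C x) = c *\<^sub>C T x)
     \<and> (\<exists>M. \<forall>x. norm (T x) \<le> M * norm x)"

text \<open>An (unbounded) operator is given by its domain \<open>D\<close> and its action \<open>h\<close> on \<open>D\<close>
(values of \<open>h\<close> outside \<open>D\<close> are irrelevant).\<close>
definition densely_defined :: "'a::complex_inner set \<Rightarrow> ('a \<Rightarrow> 'a) \<Rightarrow> bool" where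
  "densely_defined D h \<longleftrightarrow> csubspace D \<and> closure D = UNIV
     \<and> (\<forall>x\<in>D. \<forall>y\<in>D. h (x + y) = h x + h y) \<and> (\<forall>c. \<forall>x\<in>D. h (c *\<^sub>C x) = c *\<^sub>C h x)"

definition adj_dom :: "'a::complex_inner set \<Rightarrow> ('a \<Rightarrow> 'a) \<Rightarrow> 'a set" where
  "adj_dom D h = {y. \<exists>z. \<forall>x\<in>D. cinner y (h x) = cinner z x}"

definition adj :: "'a::complex_inner set \<Rightarrow> ('a \<Rightarrow> 'a) \<Rightarrow> 'a \<Rightarrow> 'a" where
  "adj D h y = (THE z. \<forall>x\<in>D. cinner y (h x) = cinner z x)"

text \<open>Metric for \<open>H\<close>: bounded, self-adjoint, non-negative, with bounded inverse, and
\<open>H* = \<Theta> H \<Theta>\<^sup>-\<^sup>1\<close> as operators (equal domains and equal actions).\<close>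
definition is_metric :: "'a::complex_inner set \<Rightarrow> ('a \<Rightarrow> 'a) \<Rightarrow> ('a \<Rightarrow> 'a) \<Rightarrow> bool" where
  "is_metric D h \<Theta> \<longleftrightarrow> cbounded_linear \<Theta>
     \<and> (\<forall>x y. cinner (\<Theta> x) y = cinner x (\<Theta> y))
     \<and> (\<forall>x. Re (cinner x (\<Theta> x)) \<ge> 0)
     \<and> (\<exists>\<Theta>'. cbounded_linear \<Theta>' \<and> (\<forall>x. \<Theta> (\<Theta>' x) = x) \<and> (\<forall>x. \<Theta>' (\<Theta> x) = x)
          \<and> adj_dom D h = {y. \<Theta>' y \<in> D}
          \<and> (\<forall>y\<in>adj_dom D h. adj D h y = \<Theta> (h (\<Theta>' y))))"

definition quasi_self_adjoint :: "'a::complex_inner set \<Rightarrow> ('a \<Rightarrow> 'a) \<Rightarrow> bool" where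
  "quasi_self_adjoint D h \<longleftrightarrow> densely_defined D h \<and> (\<exists>\<Theta>. is_metric D h \<Theta>)"

definition resolvent_set :: "'a::complex_inner set \<Rightarrow> ('a \<Rightarrow> 'a) \<Rightarrow> complex set" where
  "resolvent_set D h = {z. bij_betw (\<lambda>x. h x - z *\<^sub>C x) D UNIV
      \<and> cbounded_linear (the_inv_into D (\<lambda>x. h x - z *\<^sub>C x))}"

definition op_spectrum :: "'a::complex_inner set \<Rightarrow> ('a \<Rightarrow> 'a) \<Rightarrow> complex set" where
  "op_spectrum D h = UNIV - resolvent_set D h"

definition resolvent :: "'a::complex_inner set \<Rightarrow> ('a \<Rightarrow> 'a) \<Rightarrow> complex \<Rightarrow> 'a \<Rightarrow> 'a" where
  "resolvent D h z = the_inv_into D (\<lambda>x. h x - z *\<^sub>C x)"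

definition compact_operator :: "('a::complex_inner \<Rightarrow> 'a) \<Rightarrow> bool" where
  "compact_operator T \<longleftrightarrow> (\<forall>S. bounded S \<longrightarrow> compact (closure (T ` S)))"

text \<open>Discrete spectrum: compact resolvent.\<close>
definition compact_resolvent :: "'a::complex_inner set \<Rightarrow> ('a \<Rightarrow> 'a) \<Rightarrow> bool" where
  "compact_resolvent D h \<longleftrightarrow> (\<exists>z\<in>resolvent_set D h. compact_operator (resolvent D h z))"

definition eigenvalue :: "'a::complex_inner set \<Rightarrow> ('a \<Rightarrow> 'a) \<Rightarrow> complex \<Rightarrow> bool" where
  "eigenvalue D h z \<longleftrightarrow> (\<exists>x\<in>D. x \<noteq> 0 \<and> h x = z *\<^sub>C x)"

definition is_eigenvector :: "'a::complex_inner set \<Rightarrow> ('a \<Rightarrow> 'a) \<Rightarrow> 'a \<Rightarrow> bool" where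
  "is_eigenvector D h x \<longleftrightarrow> x \<in> D \<and> x \<noteq> 0 \<and> (\<exists>z. h x = z *\<^sub>C x)"

text \<open>Generalised eigenspace (root space) \<open>\<Union>\<^sub>k ker (H - z)\<^sup>k\<close>, with the natural domains
of the powers.\<close>
definition root_space :: "'a::complex_inner set \<Rightarrow> ('a \<Rightarrow> 'a) \<Rightarrow> complex \<Rightarrow> 'a set" where
  "root_space D h z = {x. \<exists>k. (\<forall>j<k. ((\<lambda>y. h y - z *\<^sub>C y) ^^ j) x \<in> D)
                              \<and> ((\<lambda>y. h y - z *\<^sub>C y) ^^ k) x = 0}"

text \<open>Simple spectrum: every eigenvalue has algebraic (hence geometric) multiplicity one,
i.e. its root space is one-dimensional.\<close>
definition simple_spectrum :: "'a::complex_inner set \<Rightarrow> ('a \<Rightarrow> 'a) \<Rightarrow> bool" where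
  "simple_spectrum D h \<longleftrightarrow> (\<forall>z. eigenvalue D h z \<longrightarrow>
      (\<exists>v. v \<noteq> 0 \<and> root_space D h z = {c *\<^sub>C v | c. True}))"

definition Ksum :: "nat set \<Rightarrow> (nat \<Rightarrow> 'a::real_normed_vector) \<Rightarrow> 'a" where
  "Ksum K f = lim (\<lambda>m. \<Sum>n\<in>K \<inter> {..m}. f n)"

definition is_basis :: "nat set \<Rightarrow> (nat \<Rightarrow> 'a::complex_inner) \<Rightarrow> bool" where
  "is_basis K e \<longleftrightarrow> (\<forall>x. \<exists>!c. (\<forall>n. n \<notin> K \<longrightarrow> c n = 0)
       \<and> (\<lambda>m. \<Sum>n\<in>K \<inter> {..m}. c n *\<^sub>C e n) \<longlonglongrightarrow> x)"

definition orthonormal_basis :: "nat set \<Rightarrow> (nat \<Rightarrow> 'a::complex_inner) \<Rightarrow> bool" where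
  "orthonormal_basis K e \<longleftrightarrow> (\<forall>m\<in>K. \<forall>n\<in>K. cinner (e m) (e n) = (if m = n then 1 else 0))
       \<and> closure (cspan (e ` K)) = UNIV"

definition onb_set :: "'a::complex_inner set \<Rightarrow> bool" where
  "onb_set B \<longleftrightarrow> (\<forall>x\<in>B. \<forall>y\<in>B. cinner x y = (if x = y then 1 else 0)) \<and> closure (cspan B) = UNIV"

text \<open>\<open>\<parallel>T\<parallel>\<^sub>2\<^sup>2 = Tr(T*T) = \<Sum>\<^sub>e \<parallel>T e\<parallel>\<^sup>2\<close> over an orthonormal basis (basis-independent),
valued in \<open>[0,\<infinity>]\<close>.\<close>
definition hs_norm_sq :: "('a::complex_inner \<Rightarrow> 'a) \<Rightarrow> ennreal" where
  "hs_norm_sq T = (\<Sum>\<^sub>\<infinity>e\<in>(SOME B. onb_set B). ennreal ((norm (T e))\<^sup>2))"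

definition hs_norm :: "('a::complex_inner \<Rightarrow> 'a) \<Rightarrow> ennreal" where
  "hs_norm T = (if hs_norm_sq T = \<infinity> then \<infinity> else ennreal (sqrt (enn2real (hs_norm_sq T))))"

definition theta_op :: "nat set \<Rightarrow> (nat \<Rightarrow> 'a::complex_inner) \<Rightarrow> (nat \<Rightarrow> real) \<Rightarrow> 'a \<Rightarrow> 'a" where
  "theta_op K \<phi> \<alpha> x = Ksum K (\<lambda>n. complex_of_real (1 + \<alpha> n) *\<^sub>C (cinner (\<phi> n) x *\<^sub>C \<phi> n))"

definition frakC :: "nat set \<Rightarrow> (nat \<Rightarrow> 'a::complex_inner) \<Rightarrow> ('a \<Rightarrow> 'a) set" where
  "frakC K \<phi> = {theta_op K \<phi> \<alpha> | \<alpha>. (\<forall>n\<in>K. \<alpha> n \<ge> -1) \<and> (\<lambda>n. (\<alpha> n)\<^sup>2) summable_on K}"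

end

(*
  Write \<Theta>_\<alpha> = \<Sum>_n (1 + \<alpha>_n) <\<phi>_n, .> \<phi>_n. A basis {\<psi>_n} that is quadratically close to an
  orthonormal basis {\<chi>_n} is a Riesz basis (Bari's theorem: the synthesis map
  u \<mapsto> \<Sum>_n <\<chi>_n, u> \<psi>_n is the identity plus an operator of norm at most 1/2 plus a finite-rank
  operator, and it is injective, hence bounded below). Therefore the biorthogonal family {\<phi>_n}
  is a Riesz basis as well and \<Sum>_n \<parallel>\<phi>_n - \<chi>_n\<parallel>^2 < \<infinity>. It follows that \<Theta>_0 - I is
  Hilbert-Schmidt and that \<parallel>\<Theta>_\<alpha> - \<Theta>_0\<parallel>_2^2 is comparable to \<parallel>\<alpha>\<parallel>_\<ell>2^2. So
  F(\<alpha>) = \<parallel>\<Theta>_\<alpha> - I\<parallel>_2^2 is finite on the convex set of admissible \<alpha>, and the parallelogram law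
    F(\<alpha>) + F(\<beta>) = 2 F((\<alpha> + \<beta>)/2) + 1/2 \<parallel>\<Theta>_\<alpha> - \<Theta>_\<beta>\<parallel>_2^2
  bounds \<parallel>\<alpha> - \<beta>\<parallel>_\<ell>2^2 by the excess of F(\<alpha>) and F(\<beta>) over inf F. Minimising sequences
  are therefore Cauchy in \<ell>2, their limit is a minimiser, and two minimisers coincide.
*)

theory Submission
  imports Defs
begin

lemma scaleC_zero_left [simp]: "0 *\<^sub>C (x::'a::complex_vector) = 0"
  using scaleC_add_left[of 0 0 x] by simp

lemma scaleC_zero_right [simp]: "a *\<^sub>C (0::'a::complex_vector) = 0"
  using scaleC_add_right[of a 0 0] by simp

lemma scaleC_minus_right: "a *\<^sub>C (- x) = - (a *\<^sub>C (x::'a::complex_vector))"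
  by (rule minus_unique[symmetric]) (simp flip: scaleC_add_right)

lemma scaleC_minus_left: "(- a) *\<^sub>C x = - (a *\<^sub>C (x::'a::complex_vector))"
  by (rule minus_unique[symmetric]) (simp flip: scaleC_add_left)

lemma scaleC_diff_right: "a *\<^sub>C (x - y) = a *\<^sub>C x - a *\<^sub>C (y::'a::complex_vector)"
  using scaleC_add_right[of a x "- y"] by (simp add: scaleC_minus_right)

lemma scaleC_diff_left: "(a - b) *\<^sub>C x = a *\<^sub>C x - b *\<^sub>C (x::'a::complex_vector)"
  using scaleC_add_left[of a "- b" x] by (simp add: scaleC_minus_left)

lemma scaleC_sum_right: "a *\<^sub>C (\<Sum>i\<in>F. f i) = (\<Sum>i\<in>F. a *\<^sub>C (f i::'a::complex_vector))"
  by (induction F rule: infinite_finite_induct) (simp_all add: scaleC_add_right)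

lemma cinner_add_left: "cinner (x + y) (z::'a::complex_inner) = cinner x z + cinner y z"
  by (metis cinner_commute cinner_add_right complex_cnj_add)

lemma cinner_scaleC_left: "cinner (c *\<^sub>C x) (y::'a::complex_inner) = cnj c * cinner x y"
  by (metis cinner_commute cinner_scaleC_right complex_cnj_mult complex_cnj_cnj)

lemma cinner_zero_right [simp]: "cinner x (0::'a::complex_inner) = 0"
  using cinner_add_right[of x 0 0] by simp

lemma cinner_zero_left [simp]: "cinner (0::'a::complex_inner) x = 0"
  using cinner_add_left[of 0 0 x] by simp

lemma cinner_diff_right: "cinner x (y - z) = cinner x y - cinner x (z::'a::complex_inner)"
  by (metis add_diff_cancel cinner_add_right diff_add_cancel)

lemma cinner_diff_left: "cinner (x - y) z = cinner x z - cinner y (z::'a::complex_inner)"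
  by (metis add_diff_cancel cinner_add_left diff_add_cancel)

lemma cinner_sum_right: "cinner x (\<Sum>i\<in>F. f i) = (\<Sum>i\<in>F. cinner (x::'a::complex_inner) (f i))"
  by (induction F rule: infinite_finite_induct) (simp_all add: cinner_add_right)

lemma cinner_sum_left: "cinner (\<Sum>i\<in>F. f i) x = (\<Sum>i\<in>F. cinner (f i) (x::'a::complex_inner))"
  by (induction F rule: infinite_finite_induct) (simp_all add: cinner_add_left)

lemma cinner_scaleR_left: "cinner (r *\<^sub>R x) y = complex_of_real r * cinner x (y::'a::complex_inner)"
  unfolding scaleR_scaleC[of r x] cinner_scaleC_left by simp

lemma cinner_scaleR_right: "cinner x (r *\<^sub>R y) = complex_of_real r * cinner x (y::'a::complex_inner)"
  unfolding scaleR_scaleC[of r y] cinner_scaleC_right by simp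

lemma cinner_self: "cinner x x = complex_of_real ((norm (x::'a::complex_inner))\<^sup>2)"
proof -
  have "Im (cinner x x) = 0"
    using cinner_commute[of x x] by (metis Im_complex_of_real Reals_cnj_iff complex_is_Real_iff)
  then show ?thesis by (simp add: complex_eq_iff Re_cinner power2_norm_eq_inner)
qed

lemma power2_norm_eq_Re_cinner: "(norm (x::'a::complex_inner))\<^sup>2 = Re (cinner x x)"
  by (simp add: cinner_self)

lemma cnj_mult_self: "cnj z * z = complex_of_real ((cmod z)\<^sup>2)"
  by (metis complex_norm_square mult.commute)

lemma norm_scaleC [simp]: "norm (c *\<^sub>C x) = cmod c * norm (x::'a::complex_inner)"
proof -
  have "cinner (c *\<^sub>C x) (c *\<^sub>C x) = cnj c * c * cinner x x"
    by (simp add: cinner_scaleC_left cinner_scaleC_right mult.assoc)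
  also have "\<dots> = complex_of_real ((cmod c * norm x)\<^sup>2)"
    by (simp add: cnj_mult_self cinner_self power_mult_distrib)
  finally have "(norm (c *\<^sub>C x))\<^sup>2 = (cmod c * norm x)\<^sup>2"
    by (simp add: power2_norm_eq_Re_cinner)
  then show ?thesis by (simp add: power2_eq_iff_nonneg)
qed

lemma norm_cinner_le: "cmod (cinner x y) \<le> norm x * norm (y::'a::complex_inner)"
proof (cases "cinner x y = 0")
  case False
  define c where "c = cnj (cinner x y) / complex_of_real (cmod (cinner x y))"
  have "cmod c = 1" using False by (simp add: c_def norm_divide)
  have "cmod (cinner x y) = Re (cinner x (c *\<^sub>C y))"
    using False by (simp add: c_def cinner_scaleC_right cnj_mult_self power2_eq_square)
  also have "\<dots> = inner x (c *\<^sub>C y)" by (rule Re_cinner)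
  also have "\<dots> \<le> norm x * norm (c *\<^sub>C y)" by (rule norm_cauchy_schwarz)
  finally show ?thesis using \<open>cmod c = 1\<close> by simp
qed simp

lemma power2_norm_add: "(norm (x + y))\<^sup>2 = (norm x)\<^sup>2 + (norm y)\<^sup>2 + 2 * Re (cinner x (y::'a::complex_inner))"
proof -
  have "Re (cinner y x) = Re (cinner x y)" by (subst cinner_commute) simp
  then show ?thesis
    by (simp add: power2_norm_eq_Re_cinner cinner_add_left cinner_add_right)
qed

lemma power2_norm_diff: "(norm (x - y))\<^sup>2 = (norm x)\<^sup>2 + (norm y)\<^sup>2 - 2 * Re (cinner x (y::'a::complex_inner))"
  using power2_norm_add[of x "- y"] by (simp add: cinner_diff_right[of x 0 y, simplified])

lemma bounded_bilinear_cinner: "bounded_bilinear (cinner :: 'a::complex_inner \<Rightarrow> 'a \<Rightarrow> complex)"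
proof
  fix a a' b b' :: 'a and r :: real
  show "cinner (a + a') b = cinner a b + cinner a' b" by (rule cinner_add_left)
  show "cinner a (b + b') = cinner a b + cinner a b'" by (rule cinner_add_right)
  show "cinner (r *\<^sub>R a) b = r *\<^sub>R cinner a b" by (simp add: cinner_scaleR_left scaleR_conv_of_real)
  show "cinner a (r *\<^sub>R b) = r *\<^sub>R cinner a b" by (simp add: cinner_scaleR_right scaleR_conv_of_real)
  show "\<exists>K. \<forall>a b. norm (cinner a b) \<le> norm a * norm b * K"
    by (rule exI[of _ 1]) (simp add: norm_cinner_le)
qed

lemma bounded_bilinear_scaleC: "bounded_bilinear (scaleC :: complex \<Rightarrow> 'a::complex_inner \<Rightarrow> 'a)"
proof
  fix a a' :: complex and b b' :: 'a and r :: real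
  show "(a + a') *\<^sub>C b = a *\<^sub>C b + a' *\<^sub>C b" by (rule scaleC_add_left)
  show "a *\<^sub>C (b + b') = a *\<^sub>C b + a *\<^sub>C b'" by (rule scaleC_add_right)
  show "(r *\<^sub>R a) *\<^sub>C b = r *\<^sub>R (a *\<^sub>C b)"
    unfolding scaleR_scaleC[of r "a *\<^sub>C b"] scaleC_scaleC by (simp add: scaleR_conv_of_real)
  show "a *\<^sub>C (r *\<^sub>R b) = r *\<^sub>R (a *\<^sub>C b)"
    unfolding scaleR_scaleC[of r "a *\<^sub>C b"] scaleR_scaleC[of r b] scaleC_scaleC by (simp add: mult.commute)
  show "\<exists>K. \<forall>a (b::'a). norm (a *\<^sub>C b) \<le> norm a * norm b * K"
    by (rule exI[of _ 1]) simp
qed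

lemmas tendsto_cinner = bounded_bilinear.tendsto[OF bounded_bilinear_cinner]
lemmas tendsto_scaleC = bounded_bilinear.tendsto[OF bounded_bilinear_scaleC]

lemma power2_norm_add_le: "(norm (a + b))\<^sup>2 \<le> 2 * (norm a)\<^sup>2 + 2 * (norm (b::'a::real_normed_vector))\<^sup>2"
proof -
  have "(norm (a + b))\<^sup>2 \<le> (norm a + norm b)\<^sup>2" by (intro power_mono norm_triangle_ineq) auto
  also have "\<dots> \<le> 2 * (norm a)\<^sup>2 + 2 * (norm b)\<^sup>2"
    using sum_squares_bound[of "norm a" "norm b"] by (simp add: power2_sum)
  finally show ?thesis .
qed

lemma power2_norm_add_le_weighted:
  fixes a b :: "'a::real_normed_vector"
  assumes "t > 0"
  shows "(norm (a + b))\<^sup>2 \<le> (1 + t) * (norm a)\<^sup>2 + (1 + 1/t) * (norm b)\<^sup>2"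
proof -
  have young: "2 * norm a * norm b \<le> t * (norm a)\<^sup>2 + (norm b)\<^sup>2 / t"
  proof -
    have "0 \<le> (t * norm a - norm b)\<^sup>2" by simp
    then have "(2 * norm a * norm b) * t \<le> (t * (norm a)\<^sup>2 + (norm b)\<^sup>2 / t) * t"
      using assms by (simp add: power2_eq_square algebra_simps)
    then show ?thesis using assms by (simp add: mult_le_cancel_right)
  qed
  have "(norm (a + b))\<^sup>2 \<le> (norm a + norm b)\<^sup>2" by (intro power_mono norm_triangle_ineq) auto
  also have "\<dots> \<le> (1 + t) * (norm a)\<^sup>2 + (1 + 1/t) * (norm b)\<^sup>2"
    using young by (simp add: power2_sum algebra_simps)
  finally show ?thesis .
qed

lemma norm_sum_scaleC_sq_le:
  fixes v :: "'i \<Rightarrow> 'a::complex_inner"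
  shows "(norm (\<Sum>i\<in>F. c i *\<^sub>C v i))\<^sup>2 \<le> (\<Sum>i\<in>F. (cmod (c i))\<^sup>2) * (\<Sum>i\<in>F. (norm (v i))\<^sup>2)"
proof -
  have "norm (\<Sum>i\<in>F. c i *\<^sub>C v i) \<le> (\<Sum>i\<in>F. cmod (c i) * norm (v i))"
    by (rule order_trans[OF norm_sum]) simp
  then have "(norm (\<Sum>i\<in>F. c i *\<^sub>C v i))\<^sup>2 \<le> (\<Sum>i\<in>F. cmod (c i) * norm (v i))\<^sup>2"
    by (intro power_mono) auto
  also have "\<dots> \<le> (\<Sum>i\<in>F. (cmod (c i))\<^sup>2) * (\<Sum>i\<in>F. (norm (v i))\<^sup>2)"
    by (rule Cauchy_Schwarz_ineq_sum)
  finally show ?thesis .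
qed

lemma parallelogram_law_midpoint:
  fixes a b :: "'a::real_inner"
  shows "(norm a)\<^sup>2 + (norm b)\<^sup>2 = 2 * (norm ((1/2) *\<^sub>R (a + b)))\<^sup>2 + (1/2) * (norm (a - b))\<^sup>2"
  by (simp add: power2_norm_eq_inner inner_add inner_diff algebra_simps inner_commute)

definition Kpsum :: "nat set \<Rightarrow> (nat \<Rightarrow> 'b::comm_monoid_add) \<Rightarrow> nat \<Rightarrow> 'b" where
  "Kpsum K f m = (\<Sum>n\<in>K \<inter> {..m}. f n)"

lemma Ksum_eq_lim_Kpsum: "Ksum K f = lim (Kpsum K f)"
  unfolding Ksum_def Kpsum_def[abs_def] ..

lemma filterlim_Kpsum_sets: "filterlim (\<lambda>m::nat. K \<inter> {..m}) (finite_subsets_at_top K) sequentially"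
  unfolding filterlim_finite_subsets_at_top
proof (intro allI impI)
  fix X assume X: "finite X \<and> X \<subseteq> K"
  then obtain k where k: "X \<subseteq> {..<k}" using finite_nat_bounded by blast
  show "eventually (\<lambda>m. finite (K \<inter> {..m}) \<and> X \<subseteq> K \<inter> {..m} \<and> K \<inter> {..m} \<subseteq> K) sequentially"
    using eventually_ge_at_top[of k]
  proof eventually_elim
    case (elim m)
    then show ?case using X k by auto
  qed
qed

lemma has_sum_imp_Kpsum_LIMSEQ: "(f has_sum S) K \<Longrightarrow> Kpsum K f \<longlonglongrightarrow> S"
  unfolding has_sum_def Kpsum_def by (rule filterlim_compose[OF _ filterlim_Kpsum_sets])

lemma eventually_subset_Kpsum_sets:
  "finite F \<Longrightarrow> F \<subseteq> K \<Longrightarrow> eventually (\<lambda>m. F \<subseteq> K \<inter> {..m}) sequentially"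
  using filterlim_Kpsum_sets[of K] unfolding filterlim_finite_subsets_at_top
  by (auto elim: eventually_mono)

lemma Kpsum_diff:
  "m \<le> n \<Longrightarrow> Kpsum K f n - Kpsum K f m = (\<Sum>i\<in>K \<inter> {m<..n}. (f i :: 'b::ab_group_add))"
proof -
  assume "m \<le> n"
  then have "K \<inter> {..n} = (K \<inter> {..m}) \<union> (K \<inter> {m<..n})" by auto
  moreover have "(K \<inter> {..m}) \<inter> (K \<inter> {m<..n}) = {}" by auto
  ultimately have "Kpsum K f n = Kpsum K f m + (\<Sum>i\<in>K \<inter> {m<..n}. f i)"
    unfolding Kpsum_def by (simp add: sum.union_disjoint)
  then show ?thesis by simp
qed

lemma Kpsum_truncated_LIMSEQ: "Kpsum K (\<lambda>n. if M < n then 0 else f n) \<longlonglongrightarrow> (\<Sum>n\<in>K \<inter> {..M}. f n)"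
proof (rule tendsto_eventually)
  show "eventually (\<lambda>m. Kpsum K (\<lambda>n. if M < n then 0 else f n) m = (\<Sum>n\<in>K \<inter> {..M}. f n)) sequentially"
    using eventually_ge_at_top[of M]
  proof eventually_elim
    case (elim m)
    have "Kpsum K (\<lambda>n. if M < n then 0 else f n) m = (\<Sum>n\<in>K \<inter> {..m}. if n \<in> {..M} then f n else 0)"
      unfolding Kpsum_def by (intro sum.cong) auto
    also have "\<dots> = (\<Sum>n\<in>K \<inter> {..m} \<inter> {..M}. f n)"
      by (simp add: sum.inter_restrict)
    also have "K \<inter> {..m} \<inter> {..M} = K \<inter> {..M}" using elim by auto
    finally show ?case .
  qed
qed

lemma Kpsum_convergent_if_tails_small:
  fixes x :: "nat \<Rightarrow> 'b::{real_normed_vector,complete_space}"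
  assumes "\<And>\<epsilon>. \<epsilon> > 0 \<Longrightarrow> \<exists>M. \<forall>F. finite F \<and> F \<subseteq> K \<inter> {M<..} \<longrightarrow> norm (sum x F) < \<epsilon>"
  shows "convergent (Kpsum K x)"
proof -
  have "Cauchy (Kpsum K x)"
  proof (rule CauchyI)
    fix e :: real assume "0 < e"
    then obtain M where M: "\<forall>F. finite F \<and> F \<subseteq> K \<inter> {M<..} \<longrightarrow> norm (sum x F) < e"
      using assms by blast
    have *: "norm (Kpsum K x m - Kpsum K x n) < e" if "n \<ge> M" "n \<le> m" for m n
    proof -
      have "K \<inter> {n<..m} \<subseteq> K \<inter> {M<..}" using that by auto
      then show ?thesis using M by (simp add: Kpsum_diff[OF that(2)])
    qed
    show "\<exists>M. \<forall>m\<ge>M. \<forall>n\<ge>M. norm (Kpsum K x m - Kpsum K x n) < e"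
    proof (intro exI[of _ M] allI impI)
      fix m n assume "m \<ge> M" "n \<ge> M"
      then show "norm (Kpsum K x m - Kpsum K x n) < e"
        using *[of n m] *[of m n] by (cases "n \<le> m") (auto simp: norm_minus_commute)
    qed
  qed
  then show ?thesis by (simp add: Cauchy_convergent_iff)
qed

lemma nonneg_has_sum_tails_small:
  fixes f :: "nat \<Rightarrow> real"
  assumes "(f has_sum S) K" "\<And>n. n \<in> K \<Longrightarrow> f n \<ge> 0" "\<epsilon> > 0"
  shows "\<exists>M. \<forall>F. finite F \<and> F \<subseteq> K \<inter> {M<..} \<longrightarrow> sum f F < \<epsilon>"
proof -
  obtain M where M: "\<bar>Kpsum K f M - S\<bar> < \<epsilon>"
    using has_sum_imp_Kpsum_LIMSEQ[OF assms(1)] assms(3) unfolding LIMSEQ_def dist_real_def by blast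
  have "sum f F < \<epsilon>" if F: "finite F" "F \<subseteq> K \<inter> {M<..}" for F
  proof -
    have "sum f F + Kpsum K f M = sum f (F \<union> (K \<inter> {..M}))"
      unfolding Kpsum_def using F by (subst sum.union_disjoint) auto
    also have "\<dots> \<le> S"
      by (rule finite_sum_le_has_sum[OF assms(1)]) (use F assms(2) in auto)
    finally show ?thesis using M by linarith
  qed
  then show ?thesis by blast
qed

lemma summable_on_if_finite_sums_le:
  fixes f :: "'i \<Rightarrow> real"
  assumes "\<And>x. x \<in> A \<Longrightarrow> f x \<ge> 0" "\<And>F. finite F \<Longrightarrow> F \<subseteq> A \<Longrightarrow> sum f F \<le> B"
  shows "f summable_on A" "infsum f A \<le> B"
proof -
  show "f summable_on A"
    by (rule nonneg_bdd_above_summable_on) (use assms in \<open>auto intro!: bdd_aboveI\<close>)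
  then show "infsum f A \<le> B" by (rule infsum_le_finite_sums) (use assms in auto)
qed

section \<open>Orthonormal families\<close>

definition orthonormal_on :: "'i set \<Rightarrow> ('i \<Rightarrow> 'a::complex_inner) \<Rightarrow> bool" where
  "orthonormal_on I e \<longleftrightarrow> (\<forall>i\<in>I. \<forall>j\<in>I. cinner (e i) (e j) = (if i = j then 1 else 0))"

lemma orthonormal_on_norm:
  assumes "orthonormal_on I e" "i \<in> I"
  shows "norm (e i) = 1"
proof -
  have "cinner (e i) (e i) = 1" using assms unfolding orthonormal_on_def by simp
  then have "(norm (e i))\<^sup>2 = 1" by (simp add: power2_norm_eq_Re_cinner)
  then show ?thesis using norm_ge_zero[of "e i"] by (auto simp: power2_eq_1_iff)
qed

lemma orthonormal_on_inj: "orthonormal_on I e \<Longrightarrow> inj_on e I"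
  unfolding orthonormal_on_def inj_on_def by (metis zero_neq_one)

lemma orthonormal_on_cinner_sum:
  assumes "orthonormal_on I e" "finite F" "F \<subseteq> I" "j \<in> I"
  shows "cinner (e j) (\<Sum>i\<in>F. c i *\<^sub>C e i) = (if j \<in> F then c j else 0)"
proof -
  have "cinner (e j) (\<Sum>i\<in>F. c i *\<^sub>C e i) = (\<Sum>i\<in>F. c i * cinner (e j) (e i))"
    by (simp add: cinner_sum_right cinner_scaleC_right)
  also have "\<dots> = (\<Sum>i\<in>F. if j = i then c i else 0)"
    using assms unfolding orthonormal_on_def by (intro sum.cong) auto
  finally show ?thesis using assms(2) by simp
qed

lemma orthonormal_on_norm_sum:
  assumes "orthonormal_on I e" "finite F" "F \<subseteq> I"
  shows "(norm (\<Sum>i\<in>F. c i *\<^sub>C e i))\<^sup>2 = (\<Sum>i\<in>F. (cmod (c i))\<^sup>2)"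
proof -
  let ?S = "\<Sum>i\<in>F. c i *\<^sub>C e i"
  have "cinner ?S ?S = (\<Sum>i\<in>F. cnj (c i) * cinner (e i) ?S)"
    by (simp add: cinner_sum_left cinner_scaleC_left)
  also have "\<dots> = (\<Sum>i\<in>F. cnj (c i) * c i)"
  proof (rule sum.cong[OF refl])
    fix i assume "i \<in> F"
    with assms(3) have "i \<in> I" by blast
    with \<open>i \<in> F\<close> show "cnj (c i) * cinner (e i) ?S = cnj (c i) * c i"
      by (simp add: orthonormal_on_cinner_sum[OF assms])
  qed
  also have "\<dots> = (\<Sum>i\<in>F. complex_of_real ((cmod (c i))\<^sup>2))"
    by (simp only: cnj_mult_self)
  finally show ?thesis by (simp add: power2_norm_eq_Re_cinner Re_sum)
qed

lemma bessel_identity: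
  assumes "orthonormal_on I e" "finite F" "F \<subseteq> I"
  shows "(norm (x - (\<Sum>i\<in>F. cinner (e i) x *\<^sub>C e i)))\<^sup>2
           = (norm x)\<^sup>2 - (\<Sum>i\<in>F. (cmod (cinner (e i) x))\<^sup>2)"
proof -
  let ?P = "\<Sum>i\<in>F. cinner (e i) x *\<^sub>C e i"
  have "cinner ?P x = (\<Sum>i\<in>F. complex_of_real ((cmod (cinner (e i) x))\<^sup>2))"
    by (simp add: cinner_sum_left cinner_scaleC_left cnj_mult_self)
  then have "Re (cinner x ?P) = (\<Sum>i\<in>F. (cmod (cinner (e i) x))\<^sup>2)"
    by (subst cinner_commute) (simp add: Re_sum)
  then show ?thesis
    using power2_norm_diff[of x ?P] orthonormal_on_norm_sum[OF assms, of "\<lambda>i. cinner (e i) x"]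
    by simp
qed

lemma bessel_inequality:
  assumes "orthonormal_on I e" "finite F" "F \<subseteq> I"
  shows "(\<Sum>i\<in>F. (cmod (cinner (e i) x))\<^sup>2) \<le> (norm x)\<^sup>2"
  using bessel_identity[OF assms, of x] zero_le_power2[of "norm (x - (\<Sum>i\<in>F. cinner (e i) x *\<^sub>C e i))"]
  by linarith

lemma orthogonal_projection_best_approx:
  assumes "orthonormal_on I e" "finite F" "F \<subseteq> I"
  shows "norm (x - (\<Sum>i\<in>F. cinner (e i) x *\<^sub>C e i)) \<le> norm (x - (\<Sum>i\<in>F. c i *\<^sub>C e i))"
proof -
  let ?P = "\<Sum>i\<in>F. cinner (e i) x *\<^sub>C e i" and ?Q = "\<Sum>i\<in>F. c i *\<^sub>C e i"
  have "cinner (?P - ?Q) (x - ?P) = 0"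
  proof -
    have "?P - ?Q = (\<Sum>i\<in>F. (cinner (e i) x - c i) *\<^sub>C e i)"
      by (simp add: scaleC_diff_left sum_subtractf)
    moreover have "cinner (e i) (x - ?P) = 0" if "i \<in> F" for i
      using that assms orthonormal_on_cinner_sum[OF assms, of i] by (auto simp: cinner_diff_right)
    ultimately show ?thesis by (simp add: cinner_sum_left cinner_scaleC_left)
  qed
  then have "(norm (x - ?Q))\<^sup>2 = (norm (x - ?P))\<^sup>2 + (norm (?P - ?Q))\<^sup>2"
    using power2_norm_add[of "x - ?P" "?P - ?Q"] by (subst (asm) cinner_commute) simp
  then have "(norm (x - ?P))\<^sup>2 \<le> (norm (x - ?Q))\<^sup>2" by simp
  then show ?thesis by (rule power2_le_imp_le) simp
qed

lemma cspan_orthonormal_obtain: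
  assumes "orthonormal_on I e" "y \<in> cspan (e ` I)"
  obtains F c where "finite F" "F \<subseteq> I" "y = (\<Sum>i\<in>F. c i *\<^sub>C e i)"
proof -
  from assms(2) obtain G d where G: "finite G" "G \<subseteq> e ` I" "y = (\<Sum>b\<in>G. d b *\<^sub>C b)"
    unfolding cspan_def by blast
  from finite_subset_image[OF G(1,2)] obtain F where F: "F \<subseteq> I" "finite F" "G = e ` F" by blast
  have "inj_on e F" using orthonormal_on_inj[OF assms(1)] F(1) by (rule inj_on_subset)
  then have "y = (\<Sum>i\<in>F. d (e i) *\<^sub>C e i)" using G(3) F(3) by (simp add: sum.reindex)
  from that[OF F(2) F(1) this] show ?thesis .
qed

lemma parseval_identity:
  assumes on: "orthonormal_on I e" and dense: "closure (cspan (e ` I)) = UNIV"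
  shows "((\<lambda>i. (cmod (cinner (e i) x))\<^sup>2) has_sum (norm x)\<^sup>2) I"
  unfolding has_sum_def
proof (rule tendstoI)
  fix \<epsilon> :: real assume "\<epsilon> > 0"
  have "x \<in> closure (cspan (e ` I))" using dense by simp
  then obtain y where y: "y \<in> cspan (e ` I)" "dist y x < sqrt \<epsilon>"
    using \<open>\<epsilon> > 0\<close> by (meson closure_approachable real_sqrt_gt_zero)
  obtain F c where F: "finite F" "F \<subseteq> I" "y = (\<Sum>i\<in>F. c i *\<^sub>C e i)"
    using cspan_orthonormal_obtain[OF on y(1)] by blast
  show "eventually (\<lambda>Y. dist (\<Sum>i\<in>Y. (cmod (cinner (e i) x))\<^sup>2) ((norm x)\<^sup>2) < \<epsilon>) (finite_subsets_at_top I)"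
    unfolding eventually_finite_subsets_at_top
  proof (intro exI[of _ F] conjI allI impI)
    fix Y assume Y: "finite Y \<and> F \<subseteq> Y \<and> Y \<subseteq> I"
    let ?s = "\<Sum>i\<in>Y. (cmod (cinner (e i) x))\<^sup>2"
    have y_Y: "y = (\<Sum>i\<in>Y. (if i \<in> F then c i else 0) *\<^sub>C e i)"
      unfolding F(3) by (rule sum.mono_neutral_cong_left) (use Y in auto)
    have "(norm x)\<^sup>2 - ?s = (norm (x - (\<Sum>i\<in>Y. cinner (e i) x *\<^sub>C e i)))\<^sup>2"
      using bessel_identity[OF on] Y by simp
    also have "\<dots> \<le> (norm (x - y))\<^sup>2"
      unfolding y_Y using Y by (intro power_mono orthogonal_projection_best_approx[OF on]) auto
    also have "\<dots> < (sqrt \<epsilon>)\<^sup>2"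
      using y(2) by (intro power_strict_mono) (auto simp: dist_norm norm_minus_commute)
    also have "\<dots> = \<epsilon>" using \<open>\<epsilon> > 0\<close> by simp
    finally show "dist ?s ((norm x)\<^sup>2) < \<epsilon>"
      using bessel_inequality[OF on, of Y x] Y by (simp add: dist_real_def)
  qed (use F in auto)
qed

context
  fixes K :: "nat set" and e :: "nat \<Rightarrow> 'a::complex_inner"
  assumes onb: "orthonormal_basis K e"
begin

lemma orthonormal_basis_orthonormal_on: "orthonormal_on K e"
  using onb unfolding orthonormal_basis_def orthonormal_on_def by blast

lemma orthonormal_basis_parseval: "((\<lambda>n. (cmod (cinner (e n) x))\<^sup>2) has_sum (norm x)\<^sup>2) K"
  using onb unfolding orthonormal_basis_def by (intro parseval_identity orthonormal_basis_orthonormal_on) auto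

lemma orthonormal_basis_expansion: "Kpsum K (\<lambda>n. cinner (e n) x *\<^sub>C e n) \<longlonglongrightarrow> x"
proof -
  have "(norm (x - Kpsum K (\<lambda>n. cinner (e n) x *\<^sub>C e n) m))\<^sup>2
          = (norm x)\<^sup>2 - Kpsum K (\<lambda>n. (cmod (cinner (e n) x))\<^sup>2) m" for m
    unfolding Kpsum_def by (rule bessel_identity[OF orthonormal_basis_orthonormal_on]) auto
  moreover have "(\<lambda>m. (norm x)\<^sup>2 - Kpsum K (\<lambda>n. (cmod (cinner (e n) x))\<^sup>2) m) \<longlonglongrightarrow> (norm x)\<^sup>2 - (norm x)\<^sup>2"
    by (intro tendsto_intros has_sum_imp_Kpsum_LIMSEQ orthonormal_basis_parseval)
  ultimately have "(\<lambda>m. sqrt ((norm (x - Kpsum K (\<lambda>n. cinner (e n) x *\<^sub>C e n) m))\<^sup>2)) \<longlonglongrightarrow> sqrt 0"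
    by (intro tendsto_real_sqrt) simp
  then have "(\<lambda>m. norm (Kpsum K (\<lambda>n. cinner (e n) x *\<^sub>C e n) m - x)) \<longlonglongrightarrow> 0"
    by (simp add: norm_minus_commute)
  then show ?thesis by (simp add: tendsto_norm_zero_iff LIM_zero_iff)
qed

lemma orthonormal_basis_eq_0:
  assumes "\<And>n. n \<in> K \<Longrightarrow> cinner (e n) x = 0"
  shows "x = 0"
proof -
  have "((\<lambda>n. (cmod (cinner (e n) x))\<^sup>2) has_sum 0) K"
    using assms by (subst has_sum_cong[of K _ "\<lambda>_. 0"]) auto
  then have "(norm x)\<^sup>2 = 0" using orthonormal_basis_parseval[of x] has_sum_unique by blast
  then show ?thesis by simp
qed

lemma orthonormal_basis_onb_set: "onb_set (e ` K)"
  unfolding onb_set_def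
proof (intro conjI ballI)
  fix x y assume "x \<in> e ` K" "y \<in> e ` K"
  then obtain i j where ij: "i \<in> K" "j \<in> K" "x = e i" "y = e j" by blast
  then have "(x = y) = (i = j)"
    using orthonormal_on_inj[OF orthonormal_basis_orthonormal_on] by (auto dest: inj_onD)
  with ij onb show "cinner x y = (if x = y then 1 else 0)" unfolding orthonormal_basis_def by simp
qed (use onb in \<open>simp add: orthonormal_basis_def\<close>)

end

section \<open>Riesz bounds\<close>

definition riesz_upper :: "nat set \<Rightarrow> (nat \<Rightarrow> 'a::complex_inner) \<Rightarrow> real \<Rightarrow> bool" where
  "riesz_upper K v B \<longleftrightarrow> B \<ge> 0 \<and> (\<forall>F c. finite F \<longrightarrow> F \<subseteq> K \<longrightarrow>
     (norm (\<Sum>i\<in>F. c i *\<^sub>C v i))\<^sup>2 \<le> B * (\<Sum>i\<in>F. (cmod (c i))\<^sup>2))"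

definition riesz_lower :: "nat set \<Rightarrow> (nat \<Rightarrow> 'a::complex_inner) \<Rightarrow> real \<Rightarrow> bool" where
  "riesz_lower K v A \<longleftrightarrow> A > 0 \<and> (\<forall>F c. finite F \<longrightarrow> F \<subseteq> K \<longrightarrow>
     A * (\<Sum>i\<in>F. (cmod (c i))\<^sup>2) \<le> (norm (\<Sum>i\<in>F. c i *\<^sub>C v i))\<^sup>2)"

lemma riesz_upperD:
  "riesz_upper K v B \<Longrightarrow> finite F \<Longrightarrow> F \<subseteq> K \<Longrightarrow>
     (norm (\<Sum>i\<in>F. c i *\<^sub>C v i))\<^sup>2 \<le> B * (\<Sum>i\<in>F. (cmod (c i))\<^sup>2)"
  unfolding riesz_upper_def by blast

lemma riesz_upper_nonneg: "riesz_upper K v B \<Longrightarrow> B \<ge> 0"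
  unfolding riesz_upper_def by blast

lemma riesz_lowerD:
  "riesz_lower K v A \<Longrightarrow> finite F \<Longrightarrow> F \<subseteq> K \<Longrightarrow>
     A * (\<Sum>i\<in>F. (cmod (c i))\<^sup>2) \<le> (norm (\<Sum>i\<in>F. c i *\<^sub>C v i))\<^sup>2"
  unfolding riesz_lower_def by blast

lemma riesz_lower_pos: "riesz_lower K v A \<Longrightarrow> A > 0"
  unfolding riesz_lower_def by blast

lemma riesz_upper_orthonormal: "orthonormal_on K e \<Longrightarrow> riesz_upper K e 1"
  unfolding riesz_upper_def by (simp add: orthonormal_on_norm_sum)

lemma riesz_upper_square_summable:
  assumes "((\<lambda>n. (norm (d n))\<^sup>2) has_sum D) K"
  shows "riesz_upper K d D"
  unfolding riesz_upper_def
proof (intro conjI allI impI)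
  show "D \<ge> 0" using assms by (rule has_sum_nonneg) simp
  fix F c assume "finite (F::nat set)" "F \<subseteq> K"
  have "(norm (\<Sum>i\<in>F. c i *\<^sub>C d i))\<^sup>2 \<le> (\<Sum>i\<in>F. (cmod (c i))\<^sup>2) * (\<Sum>i\<in>F. (norm (d i))\<^sup>2)"
    by (rule norm_sum_scaleC_sq_le)
  also have "\<dots> \<le> (\<Sum>i\<in>F. (cmod (c i))\<^sup>2) * D"
    using \<open>finite F\<close> \<open>F \<subseteq> K\<close>
    by (intro mult_left_mono finite_sum_le_has_sum[OF assms]) (auto simp: sum_nonneg)
  finally show "(norm (\<Sum>i\<in>F. c i *\<^sub>C d i))\<^sup>2 \<le> D * (\<Sum>i\<in>F. (cmod (c i))\<^sup>2)"
    by (simp add: mult.commute)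
qed

lemma riesz_upper_tail:
  assumes "C \<ge> 0" and tails: "\<And>F. finite F \<Longrightarrow> F \<subseteq> K \<inter> {M<..} \<Longrightarrow> (\<Sum>n\<in>F. (norm (d n))\<^sup>2) \<le> C"
  shows "riesz_upper K (\<lambda>n. if M < n then d n else 0) C"
  unfolding riesz_upper_def
proof (intro conjI allI impI)
  fix F c assume F: "finite (F::nat set)" "F \<subseteq> K"
  have "(\<Sum>i\<in>F. c i *\<^sub>C (if M < i then d i else 0)) = (\<Sum>i\<in>F. if i \<in> {M<..} then c i *\<^sub>C d i else 0)"
    by (intro sum.cong) auto
  also have "\<dots> = (\<Sum>i\<in>F \<inter> {M<..}. c i *\<^sub>C d i)"
    by (rule sum.inter_restrict[symmetric, OF F(1)])
  finally have "(norm (\<Sum>i\<in>F. c i *\<^sub>C (if M < i then d i else 0)))\<^sup>2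
      \<le> (\<Sum>i\<in>F \<inter> {M<..}. (cmod (c i))\<^sup>2) * (\<Sum>i\<in>F \<inter> {M<..}. (norm (d i))\<^sup>2)"
    using norm_sum_scaleC_sq_le[where F="F \<inter> {M<..}" and c=c and v=d] by simp
  also have "\<dots> \<le> (\<Sum>i\<in>F. (cmod (c i))\<^sup>2) * C"
  proof (rule mult_mono)
    show "(\<Sum>i\<in>F \<inter> {M<..}. (cmod (c i))\<^sup>2) \<le> (\<Sum>i\<in>F. (cmod (c i))\<^sup>2)"
      by (rule sum_mono2) (use F in auto)
    show "(\<Sum>i\<in>F \<inter> {M<..}. (norm (d i))\<^sup>2) \<le> C"
      by (rule tails) (use F in auto)
  qed (auto simp: sum_nonneg)
  finally show "(norm (\<Sum>i\<in>F. c i *\<^sub>C (if M < i then d i else 0)))\<^sup>2 \<le> C * (\<Sum>i\<in>F. (cmod (c i))\<^sup>2)"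
    by (simp add: mult.commute)
qed (rule assms(1))

lemma riesz_upper_add:
  assumes "riesz_upper K u B" "riesz_upper K v C"
  shows "riesz_upper K (\<lambda>n. u n + v n) (2 * B + 2 * C)"
  unfolding riesz_upper_def
proof (intro conjI allI impI)
  show "2 * B + 2 * C \<ge> 0" using assms by (simp add: riesz_upper_nonneg)
  fix F c assume F: "finite (F::nat set)" "F \<subseteq> K"
  have "(\<Sum>i\<in>F. c i *\<^sub>C (u i + v i)) = (\<Sum>i\<in>F. c i *\<^sub>C u i) + (\<Sum>i\<in>F. c i *\<^sub>C v i)"
    by (simp add: scaleC_add_right sum.distrib)
  then show "(norm (\<Sum>i\<in>F. c i *\<^sub>C (u i + v i)))\<^sup>2 \<le> (2 * B + 2 * C) * (\<Sum>i\<in>F. (cmod (c i))\<^sup>2)"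
    using power2_norm_add_le[of "\<Sum>i\<in>F. c i *\<^sub>C u i" "\<Sum>i\<in>F. c i *\<^sub>C v i"]
      riesz_upperD[OF assms(1) F, of c] riesz_upperD[OF assms(2) F, of c]
    by (simp add: algebra_simps)
qed

lemma bessel_of_riesz_upper:
  assumes "riesz_upper K v B" "finite F" "F \<subseteq> K"
  shows "(\<Sum>i\<in>F. (cmod (cinner (v i) x))\<^sup>2) \<le> B * (norm x)\<^sup>2"
proof -
  define c where "c i = cinner (v i) x" for i
  define s where "s = (\<Sum>i\<in>F. (cmod (c i))\<^sup>2)"
  have "s \<ge> 0" by (simp add: s_def sum_nonneg)
  have "cinner (\<Sum>i\<in>F. c i *\<^sub>C v i) x = complex_of_real s"
    by (simp add: s_def c_def cinner_sum_left cinner_scaleC_left cnj_mult_self)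
  then have "s \<le> norm (\<Sum>i\<in>F. c i *\<^sub>C v i) * norm x"
    using norm_cinner_le[of "\<Sum>i\<in>F. c i *\<^sub>C v i" x] \<open>s \<ge> 0\<close> by simp
  then have "s\<^sup>2 \<le> (norm (\<Sum>i\<in>F. c i *\<^sub>C v i))\<^sup>2 * (norm x)\<^sup>2"
    using \<open>s \<ge> 0\<close> by (metis power_mono power_mult_distrib)
  also have "\<dots> \<le> (B * s) * (norm x)\<^sup>2"
    using riesz_upperD[OF assms, of c] by (intro mult_right_mono) (auto simp: s_def)
  finally have "s * s \<le> s * (B * (norm x)\<^sup>2)" by (simp add: power2_eq_square algebra_simps)
  then have "s \<le> B * (norm x)\<^sup>2"
    using \<open>s \<ge> 0\<close> riesz_upper_nonneg[OF assms(1)]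
    by (cases "s = 0") (auto simp: mult_le_cancel_left)
  then show ?thesis by (simp add: s_def c_def)
qed

lemma riesz_upper_of_bessel:
  assumes "B \<ge> 0"
    and bessel: "\<And>F x. finite F \<Longrightarrow> F \<subseteq> K \<Longrightarrow> (\<Sum>i\<in>F. (cmod (cinner (v i) x))\<^sup>2) \<le> B * (norm x)\<^sup>2"
  shows "riesz_upper K v B"
  unfolding riesz_upper_def
proof (intro conjI allI impI)
  fix F c assume F: "finite (F::nat set)" "F \<subseteq> K"
  define y where "y = (\<Sum>i\<in>F. c i *\<^sub>C v i)"
  define s where "s = (\<Sum>i\<in>F. (cmod (c i))\<^sup>2)"
  have "cinner y y = (\<Sum>i\<in>F. cnj (c i) * cinner (v i) y)"
    unfolding y_def by (simp add: cinner_sum_left cinner_scaleC_left)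
  then have "(norm y)\<^sup>2 = (\<Sum>i\<in>F. Re (cnj (c i) * cinner (v i) y))"
    by (simp only: power2_norm_eq_Re_cinner Re_sum)
  also have "\<dots> \<le> (\<Sum>i\<in>F. cmod (c i) * cmod (cinner (v i) y))"
    by (intro sum_mono) (metis complex_Re_le_cmod complex_mod_cnj norm_mult)
  finally have "((norm y)\<^sup>2)\<^sup>2 \<le> (\<Sum>i\<in>F. cmod (c i) * cmod (cinner (v i) y))\<^sup>2"
    by (intro power_mono) auto
  also have "\<dots> \<le> s * (\<Sum>i\<in>F. (cmod (cinner (v i) y))\<^sup>2)"
    unfolding s_def by (rule Cauchy_Schwarz_ineq_sum)
  also have "\<dots> \<le> s * (B * (norm y)\<^sup>2)"
    using bessel[OF F, of y] by (intro mult_left_mono) (auto simp: s_def sum_nonneg)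
  finally have "(norm y)\<^sup>2 * (norm y)\<^sup>2 \<le> (B * s) * (norm y)\<^sup>2"
    by (simp add: power2_eq_square algebra_simps)
  moreover have "B * s \<ge> 0" using assms(1) by (simp add: s_def sum_nonneg)
  ultimately have "(norm y)\<^sup>2 \<le> B * s"
  proof (cases "norm y = 0")
    case False
    then have "(norm y)\<^sup>2 > 0" by simp
    with \<open>(norm y)\<^sup>2 * (norm y)\<^sup>2 \<le> (B * s) * (norm y)\<^sup>2\<close> show ?thesis
      by (rule mult_right_le_imp_le)
  qed simp
  then show "(norm (\<Sum>i\<in>F. c i *\<^sub>C v i))\<^sup>2 \<le> B * (\<Sum>i\<in>F. (cmod (c i))\<^sup>2)"
    by (simp add: y_def s_def)
qed (rule assms(1))

lemma bessel_summable:
  assumes "riesz_upper K v B"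
  shows "(\<lambda>i. (cmod (cinner (v i) x))\<^sup>2) summable_on K"
  by (rule summable_on_if_finite_sums_le(1)[OF _ bessel_of_riesz_upper[OF assms]]) auto

lemma riesz_upper_Kpsum_convergent:
  fixes v :: "nat \<Rightarrow> 'a::{complex_inner,complete_space}"
  assumes "riesz_upper K v B" "(\<lambda>i. (cmod (c i))\<^sup>2) summable_on K"
  shows "convergent (Kpsum K (\<lambda>i. c i *\<^sub>C v i))"
proof (rule Kpsum_convergent_if_tails_small)
  fix \<epsilon> :: real assume "\<epsilon> > 0"
  define B' where "B' = B + 1"
  have "B' > 0" using riesz_upper_nonneg[OF assms(1)] by (simp add: B'_def)
  obtain M where M: "\<forall>F. finite F \<and> F \<subseteq> K \<inter> {M<..} \<longrightarrow> (\<Sum>i\<in>F. (cmod (c i))\<^sup>2) < \<epsilon>\<^sup>2 / B'"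
    using nonneg_has_sum_tails_small[OF has_sum_infsum[OF assms(2)], of "\<epsilon>\<^sup>2 / B'"] \<open>\<epsilon> > 0\<close> \<open>B' > 0\<close>
    by auto
  have "norm (\<Sum>i\<in>F. c i *\<^sub>C v i) < \<epsilon>" if F: "finite F" "F \<subseteq> K \<inter> {M<..}" for F
  proof -
    have "(norm (\<Sum>i\<in>F. c i *\<^sub>C v i))\<^sup>2 \<le> B * (\<Sum>i\<in>F. (cmod (c i))\<^sup>2)"
      using riesz_upperD[OF assms(1)] F by auto
    also have "\<dots> \<le> B' * (\<Sum>i\<in>F. (cmod (c i))\<^sup>2)"
      by (intro mult_right_mono) (auto simp: B'_def sum_nonneg)
    also have "\<dots> < B' * (\<epsilon>\<^sup>2 / B')" using M F \<open>B' > 0\<close> by (intro mult_strict_left_mono) auto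
    also have "\<dots> = \<epsilon>\<^sup>2" using \<open>B' > 0\<close> by simp
    finally show ?thesis using \<open>\<epsilon> > 0\<close> by (simp add: power_less_imp_less_base)
  qed
  then show "\<exists>M. \<forall>F. finite F \<and> F \<subseteq> K \<inter> {M<..} \<longrightarrow> norm (\<Sum>i\<in>F. c i *\<^sub>C v i) < \<epsilon>" by blast
qed

lemma riesz_upper_limit_le:
  assumes "riesz_upper K v B" "((\<lambda>i. (cmod (c i))\<^sup>2) has_sum S) K"
    and "Kpsum K (\<lambda>i. c i *\<^sub>C v i) \<longlonglongrightarrow> y"
  shows "(norm y)\<^sup>2 \<le> B * S"
proof (rule LIMSEQ_le_const2)
  show "(\<lambda>m. (norm (Kpsum K (\<lambda>i. c i *\<^sub>C v i) m))\<^sup>2) \<longlonglongrightarrow> (norm y)\<^sup>2"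
    by (intro tendsto_intros assms(3))
  have "(norm (Kpsum K (\<lambda>i. c i *\<^sub>C v i) m))\<^sup>2 \<le> B * S" for m
  proof -
    have "(norm (Kpsum K (\<lambda>i. c i *\<^sub>C v i) m))\<^sup>2 \<le> B * (\<Sum>i\<in>K \<inter> {..m}. (cmod (c i))\<^sup>2)"
      unfolding Kpsum_def by (rule riesz_upperD[OF assms(1)]) auto
    also have "\<dots> \<le> B * S"
      using riesz_upper_nonneg[OF assms(1)]
      by (intro mult_left_mono finite_sum_le_has_sum[OF assms(2)]) auto
    finally show ?thesis .
  qed
  then show "\<exists>N. \<forall>m\<ge>N. (norm (Kpsum K (\<lambda>i. c i *\<^sub>C v i) m))\<^sup>2 \<le> B * S" by blast
qed

lemma riesz_lower_limit_ge:
  assumes "riesz_lower K v A" "Kpsum K (\<lambda>i. c i *\<^sub>C v i) \<longlonglongrightarrow> y" "finite F" "F \<subseteq> K"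
  shows "A * (\<Sum>i\<in>F. (cmod (c i))\<^sup>2) \<le> (norm y)\<^sup>2"
proof (rule LIMSEQ_le_const)
  show "(\<lambda>m. (norm (Kpsum K (\<lambda>i. c i *\<^sub>C v i) m))\<^sup>2) \<longlonglongrightarrow> (norm y)\<^sup>2"
    by (intro tendsto_intros assms(2))
  obtain N where N: "\<forall>m\<ge>N. F \<subseteq> K \<inter> {..m}"
    using eventually_subset_Kpsum_sets[OF assms(3,4)] unfolding eventually_sequentially by blast
  have "A * (\<Sum>i\<in>F. (cmod (c i))\<^sup>2) \<le> (norm (Kpsum K (\<lambda>i. c i *\<^sub>C v i) m))\<^sup>2" if "m \<ge> N" for m
  proof -
    have "A * (\<Sum>i\<in>F. (cmod (c i))\<^sup>2) \<le> A * (\<Sum>i\<in>K \<inter> {..m}. (cmod (c i))\<^sup>2)"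
      using N that riesz_lower_pos[OF assms(1)] by (intro mult_left_mono sum_mono2) auto
    also have "\<dots> \<le> (norm (Kpsum K (\<lambda>i. c i *\<^sub>C v i) m))\<^sup>2"
      unfolding Kpsum_def by (rule riesz_lowerD[OF assms(1)]) auto
    finally show ?thesis .
  qed
  then show "\<exists>N. \<forall>m\<ge>N. A * (\<Sum>i\<in>F. (cmod (c i))\<^sup>2) \<le> (norm (Kpsum K (\<lambda>i. c i *\<^sub>C v i) m))\<^sup>2"
    by blast
qed

definition biorthogonal :: "nat set \<Rightarrow> (nat \<Rightarrow> 'a::complex_inner) \<Rightarrow> (nat \<Rightarrow> 'a) \<Rightarrow> bool" where
  "biorthogonal K u w \<longleftrightarrow> (\<forall>m\<in>K. \<forall>n\<in>K. cinner (u m) (w n) = (if n = m then 1 else 0))"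

lemma biorthogonal_cinner_sum:
  assumes "biorthogonal K u w" "finite F" "F \<subseteq> K" "m \<in> K"
  shows "cinner (u m) (\<Sum>i\<in>F. c i *\<^sub>C w i) = (if m \<in> F then c m else 0)"
proof -
  have "cinner (u m) (\<Sum>i\<in>F. c i *\<^sub>C w i) = (\<Sum>i\<in>F. if m = i then c i else 0)"
    unfolding cinner_sum_right cinner_scaleC_right
    using assms unfolding biorthogonal_def by (intro sum.cong) auto
  then show ?thesis using assms(2) by simp
qed

lemma biorthogonal_coeff:
  assumes "biorthogonal K u w" "Kpsum K (\<lambda>n. a n *\<^sub>C u n) \<longlonglongrightarrow> x" "k \<in> K"
  shows "a k = cinner (w k) x"
proof -
  have "eventually (\<lambda>m. cinner (w k) (Kpsum K (\<lambda>n. a n *\<^sub>C u n) m) = a k) sequentially"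
    using eventually_ge_at_top[of k]
  proof eventually_elim
    case (elim m)
    have "cinner (w k) (u n) = (if n = k then 1 else 0)" if "n \<in> K" for n
      using assms(1,3) that unfolding biorthogonal_def by (subst cinner_commute) auto
    then have "cinner (w k) (Kpsum K (\<lambda>n. a n *\<^sub>C u n) m) = (\<Sum>n\<in>K \<inter> {..m}. if n = k then a n else 0)"
      unfolding Kpsum_def cinner_sum_right cinner_scaleC_right by (intro sum.cong) auto
    also have "\<dots> = a k" using assms(3) elim by simp
    finally show ?case .
  qed
  then have "(\<lambda>m. cinner (w k) (Kpsum K (\<lambda>n. a n *\<^sub>C u n) m)) \<longlonglongrightarrow> a k"
    by (rule tendsto_eventually)
  moreover have "(\<lambda>m. cinner (w k) (Kpsum K (\<lambda>n. a n *\<^sub>C u n) m)) \<longlonglongrightarrow> cinner (w k) x"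
    by (intro tendsto_cinner tendsto_const assms(2))
  ultimately show ?thesis by (rule LIMSEQ_unique)
qed

lemma riesz_lower_biorthogonal:
  assumes "riesz_upper K u B" "B > 0" "biorthogonal K u w"
  shows "riesz_lower K w (1 / B)"
  unfolding riesz_lower_def
proof (intro conjI allI impI)
  fix F c assume F: "finite (F::nat set)" "F \<subseteq> K"
  have "(\<Sum>i\<in>F. (cmod (c i))\<^sup>2) = (\<Sum>i\<in>F. (cmod (cinner (u i) (\<Sum>j\<in>F. c j *\<^sub>C w j)))\<^sup>2)"
    using F by (intro sum.cong) (auto simp: biorthogonal_cinner_sum[OF assms(3) F])
  also have "\<dots> \<le> B * (norm (\<Sum>j\<in>F. c j *\<^sub>C w j))\<^sup>2"
    by (rule bessel_of_riesz_upper[OF assms(1) F])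
  finally show "1 / B * (\<Sum>i\<in>F. (cmod (c i))\<^sup>2) \<le> (norm (\<Sum>i\<in>F. c i *\<^sub>C w i))\<^sup>2"
    using assms(2) by (simp add: field_simps)
qed (use assms(2) in simp)

lemma riesz_upper_biorthogonal:
  assumes "riesz_lower K u A" "is_basis K u" "biorthogonal K u w"
  shows "riesz_upper K w (1 / A)"
proof (rule riesz_upper_of_bessel)
  have "A > 0" using assms(1) by (rule riesz_lower_pos)
  then show "1 / A \<ge> 0" by simp
  fix F x assume F: "finite F" "F \<subseteq> K"
  obtain a where lim: "Kpsum K (\<lambda>n. a n *\<^sub>C u n) \<longlonglongrightarrow> x"
    using assms(2) unfolding is_basis_def Kpsum_def by (meson ex1_implies_ex)
  have "(\<Sum>i\<in>F. (cmod (cinner (w i) x))\<^sup>2) = (\<Sum>i\<in>F. (cmod (a i))\<^sup>2)"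
    using F biorthogonal_coeff[OF assms(3) lim] by (intro sum.cong) auto
  then have "A * (\<Sum>i\<in>F. (cmod (cinner (w i) x))\<^sup>2) \<le> (norm x)\<^sup>2"
    using riesz_lower_limit_ge[OF assms(1) lim F] by simp
  then show "(\<Sum>i\<in>F. (cmod (cinner (w i) x))\<^sup>2) \<le> 1 / A * (norm x)\<^sup>2"
    using \<open>A > 0\<close> by (simp add: field_simps)
qed

text \<open>\<open>lim\<close> returns an unspecified value for divergent partial sums; the Riesz upper bounds assumed
  below are what makes the partial sums converge.\<close>

definition series_op :: "nat set \<Rightarrow> (nat \<Rightarrow> 'a::complex_inner) \<Rightarrow> (nat \<Rightarrow> 'a) \<Rightarrow> 'a \<Rightarrow> 'a" where
  "series_op K a b x = lim (Kpsum K (\<lambda>n. cinner (a n) x *\<^sub>C b n))"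

context
  fixes K :: "nat set" and a b :: "nat \<Rightarrow> 'a::{complex_inner,complete_space}" and A B :: real
  assumes a: "riesz_upper K a A" and b: "riesz_upper K b B"
begin

lemma series_op_LIMSEQ: "Kpsum K (\<lambda>n. cinner (a n) x *\<^sub>C b n) \<longlonglongrightarrow> series_op K a b x"
  using riesz_upper_Kpsum_convergent[OF b bessel_summable[OF a]]
  unfolding series_op_def by (simp add: convergent_LIMSEQ_iff)

lemma series_op_norm_le:
  "(norm (series_op K a b x))\<^sup>2 \<le> B * infsum (\<lambda>n. (cmod (cinner (a n) x))\<^sup>2) K"
  by (rule riesz_upper_limit_le[OF b has_sum_infsum[OF bessel_summable[OF a]] series_op_LIMSEQ])

lemma series_op_bounded: "(norm (series_op K a b x))\<^sup>2 \<le> B * A * (norm x)\<^sup>2"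
proof -
  have "infsum (\<lambda>n. (cmod (cinner (a n) x))\<^sup>2) K \<le> A * (norm x)\<^sup>2"
    by (rule summable_on_if_finite_sums_le(2)[OF _ bessel_of_riesz_upper[OF a]]) auto
  then have "B * infsum (\<lambda>n. (cmod (cinner (a n) x))\<^sup>2) K \<le> B * (A * (norm x)\<^sup>2)"
    using riesz_upper_nonneg[OF b] by (rule mult_left_mono)
  then show ?thesis using series_op_norm_le[of x] by (simp add: mult.assoc)
qed

lemma series_op_diff: "series_op K a b (x - y) = series_op K a b x - series_op K a b y"
proof -
  have "Kpsum K (\<lambda>n. cinner (a n) (x - y) *\<^sub>C b n)
          = (\<lambda>m. Kpsum K (\<lambda>n. cinner (a n) x *\<^sub>C b n) m - Kpsum K (\<lambda>n. cinner (a n) y *\<^sub>C b n) m)"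
    by (simp add: Kpsum_def fun_eq_iff cinner_diff_right scaleC_diff_left sum_subtractf)
  then have "Kpsum K (\<lambda>n. cinner (a n) (x - y) *\<^sub>C b n) \<longlonglongrightarrow> series_op K a b x - series_op K a b y"
    by (simp add: tendsto_diff series_op_LIMSEQ)
  then show ?thesis by (rule LIMSEQ_unique[OF series_op_LIMSEQ])
qed

lemma series_op_scaleC: "series_op K a b (s *\<^sub>C x) = s *\<^sub>C series_op K a b x"
proof -
  have "Kpsum K (\<lambda>n. cinner (a n) (s *\<^sub>C x) *\<^sub>C b n) = (\<lambda>m. s *\<^sub>C Kpsum K (\<lambda>n. cinner (a n) x *\<^sub>C b n) m)"
    by (simp add: Kpsum_def fun_eq_iff cinner_scaleC_right scaleC_scaleC scaleC_sum_right)
  then have "Kpsum K (\<lambda>n. cinner (a n) (s *\<^sub>C x) *\<^sub>C b n) \<longlonglongrightarrow> s *\<^sub>C series_op K a b x"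
    by (simp add: tendsto_scaleC series_op_LIMSEQ)
  then show ?thesis by (rule LIMSEQ_unique[OF series_op_LIMSEQ])
qed

lemma series_op_continuous:
  assumes "X \<longlonglongrightarrow> x"
  shows "(\<lambda>k. series_op K a b (X k)) \<longlonglongrightarrow> series_op K a b x"
proof -
  have BA: "B * A \<ge> 0"
    using riesz_upper_nonneg[OF a] riesz_upper_nonneg[OF b] by simp
  have bound: "norm (series_op K a b (X k) - series_op K a b x) \<le> sqrt (B * A) * norm (X k - x)" for k
  proof -
    have "sqrt ((norm (series_op K a b (X k - x)))\<^sup>2) \<le> sqrt (B * A * (norm (X k - x))\<^sup>2)"
      by (rule real_sqrt_le_mono[OF series_op_bounded])
    then show ?thesis using BA by (simp add: real_sqrt_mult series_op_diff)
  qed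
  have lim0: "(\<lambda>k. sqrt (B * A) * norm (X k - x)) \<longlonglongrightarrow> 0"
    by (rule tendsto_mult_right_zero[OF tendsto_norm_zero[OF LIM_zero[OF assms]]])
  have "(\<lambda>k. norm (series_op K a b (X k) - series_op K a b x)) \<longlonglongrightarrow> 0"
  proof (rule tendsto_sandwich[OF always_eventually always_eventually tendsto_const lim0])
    show "\<forall>k. norm (series_op K a b (X k) - series_op K a b x) \<le> sqrt (B * A) * norm (X k - x)"
      using bound by blast
  qed simp
  then show ?thesis by (simp add: tendsto_norm_zero_iff LIM_zero_iff)
qed

end

lemma series_op_adjoint:
  fixes a b :: "nat \<Rightarrow> 'a::{complex_inner,complete_space}"
  assumes a: "riesz_upper K a A" and b: "riesz_upper K b B"
  shows "cinner g (series_op K a b f) = cinner (series_op K b a g) f"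
proof -
  have eq: "cinner g (Kpsum K (\<lambda>n. cinner (a n) f *\<^sub>C b n) m)
              = cinner (Kpsum K (\<lambda>n. cinner (b n) g *\<^sub>C a n) m) f" for m
  proof -
    have "(\<Sum>n\<in>K \<inter> {..m}. cinner (a n) f * cinner g (b n))
            = (\<Sum>n\<in>K \<inter> {..m}. cnj (cinner (b n) g) * cinner (a n) f)"
      by (rule sum.cong[OF refl]) (subst cinner_commute[of g], simp add: mult.commute)
    then show ?thesis
      by (simp add: Kpsum_def cinner_sum_left cinner_sum_right cinner_scaleC_left cinner_scaleC_right)
  qed
  have "(\<lambda>m. cinner g (Kpsum K (\<lambda>n. cinner (a n) f *\<^sub>C b n) m)) \<longlonglongrightarrow> cinner g (series_op K a b f)"
    using series_op_LIMSEQ[OF a b] by (intro tendsto_cinner tendsto_const)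
  then have "(\<lambda>m. cinner (Kpsum K (\<lambda>n. cinner (b n) g *\<^sub>C a n) m) f) \<longlonglongrightarrow> cinner g (series_op K a b f)"
    by (simp only: eq)
  moreover have "(\<lambda>m. cinner (Kpsum K (\<lambda>n. cinner (b n) g *\<^sub>C a n) m) f) \<longlonglongrightarrow> cinner (series_op K b a g) f"
    using series_op_LIMSEQ[OF b a] by (intro tendsto_cinner tendsto_const)
  ultimately show ?thesis by (rule LIMSEQ_unique)
qed

lemma series_op_add_left:
  fixes a a' b :: "nat \<Rightarrow> 'a::{complex_inner,complete_space}"
  assumes "riesz_upper K a A" "riesz_upper K a' A'" "riesz_upper K b B"
  shows "series_op K (\<lambda>n. a n + a' n) b x = series_op K a b x + series_op K a' b x"
proof -
  have "Kpsum K (\<lambda>n. cinner (a n + a' n) x *\<^sub>C b n)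
          = (\<lambda>m. Kpsum K (\<lambda>n. cinner (a n) x *\<^sub>C b n) m + Kpsum K (\<lambda>n. cinner (a' n) x *\<^sub>C b n) m)"
    by (simp add: Kpsum_def fun_eq_iff cinner_add_left scaleC_add_left sum.distrib)
  then have "Kpsum K (\<lambda>n. cinner (a n + a' n) x *\<^sub>C b n) \<longlonglongrightarrow> series_op K a b x + series_op K a' b x"
    using series_op_LIMSEQ[OF assms(1,3)] series_op_LIMSEQ[OF assms(2,3)] by (simp add: tendsto_add)
  then show ?thesis by (rule LIMSEQ_unique[OF series_op_LIMSEQ[OF riesz_upper_add[OF assms(1,2)] assms(3)]])
qed

lemma series_op_orthonormal_basis_sum:
  fixes e v :: "nat \<Rightarrow> 'a::{complex_inner,complete_space}"
  assumes onb: "orthonormal_basis K e" and "riesz_upper K v B" "finite F" "F \<subseteq> K"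
  shows "series_op K e v (\<Sum>i\<in>F. c i *\<^sub>C e i) = (\<Sum>i\<in>F. c i *\<^sub>C v i)"
proof -
  let ?u = "\<Sum>i\<in>F. c i *\<^sub>C e i"
  have "eventually (\<lambda>m. Kpsum K (\<lambda>n. cinner (e n) ?u *\<^sub>C v n) m = (\<Sum>i\<in>F. c i *\<^sub>C v i)) sequentially"
    using eventually_subset_Kpsum_sets[OF assms(3,4)]
  proof eventually_elim
    case (elim m)
    have "Kpsum K (\<lambda>n. cinner (e n) ?u *\<^sub>C v n) m = (\<Sum>n\<in>K \<inter> {..m}. (if n \<in> F then c n else 0) *\<^sub>C v n)"
      unfolding Kpsum_def
      by (intro sum.cong) (simp_all add: orthonormal_on_cinner_sum[OF orthonormal_basis_orthonormal_on[OF onb] assms(3,4)])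
    also have "\<dots> = (\<Sum>i\<in>F. c i *\<^sub>C v i)"
      by (rule sum.mono_neutral_cong_right) (use elim assms(3) in auto)
    finally show ?case .
  qed
  then have "Kpsum K (\<lambda>n. cinner (e n) ?u *\<^sub>C v n) \<longlonglongrightarrow> (\<Sum>i\<in>F. c i *\<^sub>C v i)"
    by (rule tendsto_eventually)
  then show ?thesis
    by (rule LIMSEQ_unique[OF series_op_LIMSEQ[OF riesz_upper_orthonormal[OF orthonormal_basis_orthonormal_on[OF onb]]  assms(2)]])
qed

section \<open>Bases quadratically close to an orthonormal basis\<close>

lemma finite_bolzano_weierstrass:
  fixes f :: "nat \<Rightarrow> 'i \<Rightarrow> complex"
  assumes "finite G" and "\<And>k n. n \<in> G \<Longrightarrow> cmod (f k n) \<le> C"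
  shows "\<exists>r. strict_mono r \<and> (\<forall>n\<in>G. convergent (\<lambda>k. f (r k) n))"
  using assms
proof (induction G rule: finite_induct)
  case empty
  show ?case by (rule exI[of _ id]) (simp add: strict_mono_def)
next
  case (insert g G)
  then obtain r where r: "strict_mono r" "\<forall>n\<in>G. convergent (\<lambda>k. f (r k) n)" by blast
  have "bounded (range (\<lambda>k. f (r k) g))"
    using insert.prems by (intro boundedI[of _ C]) auto
  then obtain l r' where r': "strict_mono r'" "((\<lambda>k. f (r k) g) \<circ> r') \<longlonglongrightarrow> l"
    using bounded_imp_convergent_subsequence by blast
  have "convergent (\<lambda>k. f ((r \<circ> r') k) n)" if "n \<in> insert g G" for n
  proof (cases "n = g")
    case True
    then show ?thesis using r'(2) by (auto simp: convergent_def o_def)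
  next
    case False
    then have "convergent ((\<lambda>k. f (r k) n) \<circ> r')"
      using that r(2) r'(1) convergent_subseq_convergent by blast
    then show ?thesis by (simp add: o_def)
  qed
  moreover have "strict_mono (r \<circ> r')" using r(1) r'(1) by (rule strict_mono_o)
  ultimately show ?case by blast
qed

lemma unit_null_sequence_if_not_bounded_below:
  fixes T :: "'a::complex_inner \<Rightarrow> 'b::complex_inner"
  assumes hom: "\<And>s x. T (s *\<^sub>C x) = s *\<^sub>C T x"
    and not_below: "\<not> (\<exists>c>0. \<forall>u. c * norm u \<le> norm (T u))"
  obtains U where "\<And>k. norm (U k) = 1" "(\<lambda>k. T (U k)) \<longlonglongrightarrow> 0"
proof -
  have "\<exists>u. norm u = 1 \<and> norm (T u) < inverse (real (Suc k))" for k
  proof -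
    obtain u where u: "inverse (real (Suc k)) * norm u > norm (T u)"
      using not_below by (metis not_le of_nat_0_less_iff positive_imp_inverse_positive zero_less_Suc)
    then have "u \<noteq> 0" by (metis mult_zero_right norm_ge_zero norm_zero not_less)
    define s where "s = complex_of_real (inverse (norm u))"
    have "norm (s *\<^sub>C u) = 1" using \<open>u \<noteq> 0\<close> by (simp add: s_def norm_inverse)
    moreover have "norm (T (s *\<^sub>C u)) = norm (T u) / norm u"
      by (simp add: hom s_def norm_inverse divide_inverse mult.commute)
    moreover have "norm (T u) / norm u < inverse (real (Suc k))"
      using u \<open>u \<noteq> 0\<close> by (simp add: pos_divide_less_eq)
    ultimately show ?thesis by (intro exI[of _ "s *\<^sub>C u"]) simp
  qed
  then obtain U where U: "\<And>k. norm (U k) = 1" "\<And>k. norm (T (U k)) < inverse (real (Suc k))"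
    by metis
  have "(\<lambda>k. norm (T (U k))) \<longlonglongrightarrow> 0"
    by (rule tendsto_sandwich[OF always_eventually always_eventually tendsto_const LIMSEQ_inverse_real_of_nat])
      (use U(2) less_imp_le in auto)
  then have "(\<lambda>k. T (U k)) \<longlonglongrightarrow> 0" by (simp add: tendsto_norm_zero_iff)
  with U(1) show ?thesis by (rule that)
qed

lemma Cauchy_if_Cauchy_near_identity:
  fixes X :: "nat \<Rightarrow> 'a::real_normed_vector"
  assumes Y: "Cauchy (\<lambda>k. X k + S (X k))"
    and S_diff: "\<And>x y. S (x - y) = S x - S y" and S_small: "\<And>x. norm (S x) \<le> norm x / 2"
  shows "Cauchy X"
proof (rule CauchyI)
  have inverse_bound: "norm (a - b) \<le> 2 * norm ((a + S a) - (b + S b))" for a b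
  proof -
    have eq: "(a + S a) - (b + S b) = (a - b) + S (a - b)" by (simp add: S_diff)
    have "norm (a - b) \<le> norm ((a - b) + S (a - b)) + norm (S (a - b))"
      using norm_triangle_ineq4[of "(a - b) + S (a - b)" "S (a - b)"] by simp
    then show ?thesis unfolding eq using S_small[of "a - b"] by linarith
  qed
  fix \<epsilon> :: real assume "\<epsilon> > 0"
  then obtain N where N: "\<forall>m\<ge>N. \<forall>n\<ge>N. norm ((X m + S (X m)) - (X n + S (X n))) < \<epsilon> / 2"
    using Y unfolding Cauchy_iff by (meson half_gt_zero)
  show "\<exists>M. \<forall>m\<ge>M. \<forall>n\<ge>M. norm (X m - X n) < \<epsilon>"
  proof (intro exI[of _ N] allI impI)
    fix m n assume "m \<ge> N" "n \<ge> N"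
    with N have "norm ((X m + S (X m)) - (X n + S (X n))) < \<epsilon> / 2" by blast
    then show "norm (X m - X n) < \<epsilon>" using inverse_bound[of "X m" "X n"] by simp
  qed
qed

text \<open>The compactness step of Bari's theorem.\<close>

lemma convergent_subseq_near_identity:
  fixes X :: "nat \<Rightarrow> 'a::{complex_inner,complete_space}"
  assumes S_diff: "\<And>x y. S (x - y) = S x - S y"
    and S_small: "\<And>x. norm (S x) \<le> norm x / 2"
    and "finite G" and bounded: "\<And>k n. n \<in> G \<Longrightarrow> cmod (cinner (e n) (X k)) \<le> C"
    and lim: "(\<lambda>k. X k + S (X k) + (\<Sum>n\<in>G. cinner (e n) (X k) *\<^sub>C d n)) \<longlonglongrightarrow> y"
  shows "\<exists>r. strict_mono r \<and> convergent (X \<circ> r)"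
proof -
  obtain r where r: "strict_mono r" "\<forall>n\<in>G. convergent (\<lambda>k. cinner (e n) (X (r k)))"
    using finite_bolzano_weierstrass[OF \<open>finite G\<close>, of "\<lambda>k n. cinner (e n) (X k)"] bounded by blast
  define R where "R k = (\<Sum>n\<in>G. cinner (e n) (X (r k)) *\<^sub>C d n)" for k
  have "R \<longlonglongrightarrow> (\<Sum>n\<in>G. lim (\<lambda>k. cinner (e n) (X (r k))) *\<^sub>C d n)"
    unfolding R_def using r(2)
    by (intro tendsto_sum tendsto_scaleC tendsto_const) (simp add: convergent_LIMSEQ_iff)
  moreover have "(\<lambda>k. X (r k) + S (X (r k)) + R k) \<longlonglongrightarrow> y"
    using LIMSEQ_subseq_LIMSEQ[OF lim r(1)] by (simp add: R_def o_def)
  ultimately have "(\<lambda>k. (X (r k) + S (X (r k)) + R k) - R k) \<longlonglongrightarrow> y - (\<Sum>n\<in>G. lim (\<lambda>k. cinner (e n) (X (r k))) *\<^sub>C d n)"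
    by (intro tendsto_diff)
  then have Y: "Cauchy (\<lambda>k. X (r k) + S (X (r k)))"
    by (simp add: LIMSEQ_imp_Cauchy)
  then have "Cauchy (X \<circ> r)"
    unfolding o_def by (rule Cauchy_if_Cauchy_near_identity[OF _ S_diff S_small])
  then show ?thesis using r(1) by (auto simp: Cauchy_convergent_iff)
qed

context
  fixes K :: "nat set" and e v :: "nat \<Rightarrow> 'a::{complex_inner,complete_space}" and D :: real
  assumes onb: "orthonormal_basis K e"
    and close: "((\<lambda>n. (norm (v n - e n))\<^sup>2) has_sum D) K"
begin

lemma riesz_upper_quadratically_close: "riesz_upper K v (2 + 2 * D)"
proof -
  have "riesz_upper K (\<lambda>n. e n + (v n - e n)) (2 * 1 + 2 * D)"
    by (rule riesz_upper_add[OF riesz_upper_orthonormal[OF orthonormal_basis_orthonormal_on[OF onb]]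
          riesz_upper_square_summable[OF close]])
  then show ?thesis by simp
qed

lemma series_op_injective:
  assumes basis: "is_basis K v" and "series_op K e v u = 0"
  shows "u = 0"
proof -
  define a where "a n = (if n \<in> K then cinner (e n) u else 0)" for n
  let ?expands_0 = "\<lambda>c. (\<forall>n. n \<notin> K \<longrightarrow> c n = 0) \<and> (\<lambda>m. \<Sum>n\<in>K \<inter> {..m}. c n *\<^sub>C v n) \<longlonglongrightarrow> 0"
  have a_expands: "?expands_0 a"
  proof
    have "(\<lambda>m. \<Sum>n\<in>K \<inter> {..m}. a n *\<^sub>C v n) = Kpsum K (\<lambda>n. cinner (e n) u *\<^sub>C v n)"
      unfolding Kpsum_def by (intro ext sum.cong) (auto simp: a_def)
    then show "(\<lambda>m. \<Sum>n\<in>K \<inter> {..m}. a n *\<^sub>C v n) \<longlonglongrightarrow> 0"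
      using series_op_LIMSEQ[OF riesz_upper_orthonormal[OF orthonormal_basis_orthonormal_on[OF onb]]
          riesz_upper_quadratically_close, of u] assms(2)
      by simp
  qed (simp add: a_def)
  have unique: "\<exists>!c. ?expands_0 c" using basis unfolding is_basis_def by (rule spec)
  have "a = (\<lambda>_. 0)"
    using the1_equality[of ?expands_0, OF unique a_expands] the1_equality[of ?expands_0, OF unique, of "\<lambda>_. 0"]
    by simp
  show "u = 0"
  proof (rule orthonormal_basis_eq_0[OF onb])
    fix n assume "n \<in> K"
    then show "cinner (e n) u = 0" using fun_cong[OF \<open>a = (\<lambda>_. 0)\<close>, of n] by (simp add: a_def)
  qed
qed

lemma series_op_near_identity:
  obtains G S where "finite G" "G \<subseteq> K" "\<And>x y. S (x - y) = S x - S y" "\<And>x. norm (S x) \<le> norm x / 2"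
    "\<And>u. series_op K e v u = u + S u + (\<Sum>n\<in>G. cinner (e n) u *\<^sub>C (v n - e n))"
proof -
  define d where "d n = v n - e n" for n
  obtain M where M: "\<forall>F. finite F \<and> F \<subseteq> K \<inter> {M<..} \<longrightarrow> (\<Sum>n\<in>F. (norm (d n))\<^sup>2) < 1/4"
    using nonneg_has_sum_tails_small[OF close[folded d_def], of "1/4"] by auto
  define tail where "tail n = (if M < n then d n else 0)" for n
  define head where "head n = (if M < n then 0 else d n)" for n
  define G where "G = K \<inter> {..M}"
  have tail_upper: "riesz_upper K tail (1/4)"
    unfolding tail_def
  proof (rule riesz_upper_tail)
    fix F assume "finite F" "F \<subseteq> K \<inter> {M<..}"
    with M show "(\<Sum>n\<in>F. (norm (d n))\<^sup>2) \<le> 1/4" by (simp add: less_imp_le)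
  qed simp
  have e: "riesz_upper K e 1" by (rule riesz_upper_orthonormal[OF orthonormal_basis_orthonormal_on[OF onb]])
  define S where "S = series_op K e tail"
  show ?thesis
  proof
    show "finite G" "G \<subseteq> K" by (auto simp: G_def)
    show "S (x - y) = S x - S y" for x y unfolding S_def by (rule series_op_diff[OF e tail_upper])
    show "norm (S x) \<le> norm x / 2" for x
    proof (rule power2_le_imp_le)
      show "(norm (S x))\<^sup>2 \<le> (norm x / 2)\<^sup>2"
        using series_op_bounded[OF e tail_upper, of x] by (simp add: S_def power_divide)
    qed simp
    fix u
    have "v n = e n + tail n + head n" for n by (simp add: tail_def head_def d_def)
    then have split: "Kpsum K (\<lambda>n. cinner (e n) u *\<^sub>C v n) = (\<lambda>m. Kpsum K (\<lambda>n. cinner (e n) u *\<^sub>C e n) m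
        + Kpsum K (\<lambda>n. cinner (e n) u *\<^sub>C tail n) m + Kpsum K (\<lambda>n. cinner (e n) u *\<^sub>C head n) m)"
      by (simp add: fun_eq_iff Kpsum_def scaleC_add_right sum.distrib)
    have head_lim: "Kpsum K (\<lambda>n. cinner (e n) u *\<^sub>C head n) \<longlonglongrightarrow> (\<Sum>n\<in>G. cinner (e n) u *\<^sub>C d n)"
      unfolding head_def G_def using Kpsum_truncated_LIMSEQ[of K M "\<lambda>n. cinner (e n) u *\<^sub>C d n"]
      by (simp add: if_distrib[of "\<lambda>x. _ *\<^sub>C x"] cong: if_cong)
    have "Kpsum K (\<lambda>n. cinner (e n) u *\<^sub>C v n) \<longlonglongrightarrow> u + S u + (\<Sum>n\<in>G. cinner (e n) u *\<^sub>C d n)"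
      unfolding split S_def
      by (intro tendsto_add orthonormal_basis_expansion[OF onb] series_op_LIMSEQ[OF e tail_upper] head_lim)
    then show "series_op K e v u = u + S u + (\<Sum>n\<in>G. cinner (e n) u *\<^sub>C (v n - e n))"
      unfolding d_def by (rule LIMSEQ_unique[OF series_op_LIMSEQ[OF e riesz_upper_quadratically_close]])
  qed
qed

lemma series_op_bounded_below:
  assumes basis: "is_basis K v"
  shows "\<exists>c>0. \<forall>u. c * norm u \<le> norm (series_op K e v u)"
proof (rule ccontr)
  let ?T = "series_op K e v"
  have e: "riesz_upper K e 1" by (rule riesz_upper_orthonormal[OF orthonormal_basis_orthonormal_on[OF onb]])
  note v = riesz_upper_quadratically_close
  assume not_below: "\<not> ?thesis"
  obtain U where U: "\<And>k. norm (U k) = 1" and TU: "(\<lambda>k. ?T (U k)) \<longlonglongrightarrow> 0"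
    by (rule unit_null_sequence_if_not_bounded_below[OF series_op_scaleC[OF e v] not_below], rule that)
  obtain G S where G: "finite G" "G \<subseteq> K" and S: "\<And>x y. S (x - y) = S x - S y" "\<And>x. norm (S x) \<le> norm x / 2"
    and T: "\<And>u. ?T u = u + S u + (\<Sum>n\<in>G. cinner (e n) u *\<^sub>C (v n - e n))"
    by (rule series_op_near_identity, rule that)
  have "cmod (cinner (e n) (U k)) \<le> 1" if "n \<in> G" for k n
    using norm_cinner_le[of "e n" "U k"] U(1) orthonormal_on_norm[OF orthonormal_basis_orthonormal_on[OF onb]]
      that G(2) by auto
  then obtain r where r: "strict_mono r" "convergent (U \<circ> r)"
    using convergent_subseq_near_identity[OF S G(1), of e U 1 "\<lambda>n. v n - e n" 0] TU by (auto simp: T)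
  then obtain u where u: "(U \<circ> r) \<longlonglongrightarrow> u" by (auto simp: convergent_def)
  have "norm u = 1"
    using tendsto_norm[OF u] U(1) by (simp add: o_def LIMSEQ_const_iff)
  moreover have "?T u = 0"
    using series_op_continuous[OF e v u] LIMSEQ_subseq_LIMSEQ[OF TU r(1)]
    by (simp add: o_def LIMSEQ_unique)
  ultimately show False using series_op_injective[OF basis] by force
qed

theorem riesz_lower_quadratically_close_basis:
  assumes "is_basis K v"
  shows "\<exists>A. riesz_lower K v A"
proof -
  obtain c where c: "c > 0" "\<And>u. c * norm u \<le> norm (series_op K e v u)"
    using series_op_bounded_below[OF assms] by blast
  have "c\<^sup>2 * (\<Sum>i\<in>F. (cmod (a i))\<^sup>2) \<le> (norm (\<Sum>i\<in>F. a i *\<^sub>C v i))\<^sup>2"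
    if F: "finite F" "F \<subseteq> K" for F a
  proof -
    let ?u = "\<Sum>i\<in>F. a i *\<^sub>C e i"
    have "(c * norm ?u)\<^sup>2 \<le> (norm (series_op K e v ?u))\<^sup>2"
      using c by (intro power_mono) auto
    then show ?thesis
      by (simp add: power_mult_distrib series_op_orthonormal_basis_sum[OF onb riesz_upper_quadratically_close F]
          orthonormal_on_norm_sum[OF orthonormal_basis_orthonormal_on[OF onb] F])
  qed
  then have "riesz_lower K v (c\<^sup>2)" unfolding riesz_lower_def using c(1) by simp
  then show ?thesis ..
qed

end

lemma biorthogonal_quadratically_close:
  fixes u w e :: "nat \<Rightarrow> 'a::complex_inner"
  assumes onb: "orthonormal_basis K e" and bi: "biorthogonal K u w" and w: "riesz_upper K w Bw"
    and close: "((\<lambda>n. (norm (u n - e n))\<^sup>2) has_sum D) K"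
  shows "(\<lambda>n. (norm (w n - e n))\<^sup>2) summable_on K" "infsum (\<lambda>n. (norm (w n - e n))\<^sup>2) K \<le> Bw * D"
proof -
  have coeff: "((\<lambda>m. (cmod (cinner (w n) (u m - e m)))\<^sup>2) has_sum (norm (w n - e n))\<^sup>2) K" if "n \<in> K" for n
  proof -
    have "(cmod (cinner (e m) (w n - e n)))\<^sup>2 = (cmod (cinner (w n) (u m - e m)))\<^sup>2" if "m \<in> K" for m
    proof -
      have "cinner (u m) (w n) = cinner (e m) (e n)"
        using bi onb \<open>n \<in> K\<close> \<open>m \<in> K\<close> unfolding biorthogonal_def orthonormal_basis_def by auto
      then have "cinner (e m) (w n - e n) = - cinner (u m - e m) (w n)"
        by (simp add: cinner_diff_left cinner_diff_right)
      moreover have "cmod (cinner (u m - e m) (w n)) = cmod (cinner (w n) (u m - e m))"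
        by (subst cinner_commute) simp
      ultimately show ?thesis by simp
    qed
    then show ?thesis
      using has_sum_cong[of K "\<lambda>m. (cmod (cinner (e m) (w n - e n)))\<^sup>2" "\<lambda>m. (cmod (cinner (w n) (u m - e m)))\<^sup>2"]
        orthonormal_basis_parseval[OF onb, of "w n - e n"]
      by blast
  qed
  have "(\<Sum>n\<in>G. (norm (w n - e n))\<^sup>2) \<le> Bw * D" if G: "finite G" "G \<subseteq> K" for G
  proof -
    have "((\<lambda>m. \<Sum>n\<in>G. (cmod (cinner (w n) (u m - e m)))\<^sup>2) has_sum (\<Sum>n\<in>G. (norm (w n - e n))\<^sup>2)) K"
      using G
    proof (induction G rule: finite_induct)
      case (insert n G)
      then show ?case by (simp add: has_sum_add coeff)
    qed simp
    then show ?thesis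
      using has_sum_cmult_right[OF close, of Bw] bessel_of_riesz_upper[OF w G] by (rule has_sum_mono)
  qed
  then show "(\<lambda>n. (norm (w n - e n))\<^sup>2) summable_on K" "infsum (\<lambda>n. (norm (w n - e n))\<^sup>2) K \<le> Bw * D"
    using summable_on_if_finite_sums_le[of K "\<lambda>n. (norm (w n - e n))\<^sup>2" "Bw * D"] by auto
qed

section \<open>Hilbert--Schmidt sums\<close>

lemma ennreal_infsum_has_sum:
  fixes g :: "'i \<Rightarrow> real"
  assumes "(g has_sum S) A" "\<And>x. x \<in> A \<Longrightarrow> g x \<ge> 0"
  shows "(\<Sum>\<^sub>\<infinity>x\<in>A. ennreal (g x)) = ennreal S"
proof -
  have S: "infsum g A = S" "g summable_on A" using assms(1) by (auto simp: has_sum_iff)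
  have "ennreal (infsum g A) = (SUP F\<in>{F. finite F \<and> F \<subseteq> A}. ennreal (sum g F))"
    by (rule infsum_nonneg_is_SUPREMUM_ennreal[OF S(2) assms(2)])
  also have "\<dots> = (SUP F\<in>{F. finite F \<and> F \<subseteq> A}. (\<Sum>x\<in>F. ennreal (g x)))"
    using assms(2) by (intro SUP_cong refl sum_ennreal[symmetric]) auto
  also have "\<dots> = (\<Sum>\<^sub>\<infinity>x\<in>A. ennreal (g x))" by (rule nonneg_infsum_complete[symmetric]) simp
  finally show ?thesis using S by simp
qed

lemma ennreal_infsum_le_imp_summable:
  fixes g :: "'i \<Rightarrow> real"
  assumes "\<And>x. x \<in> A \<Longrightarrow> g x \<ge> 0" "(\<Sum>\<^sub>\<infinity>x\<in>A. ennreal (g x)) \<le> ennreal R" "R \<ge> 0"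
  shows "g summable_on A" "infsum g A \<le> R"
proof -
  have "sum g F \<le> R" if "finite F" "F \<subseteq> A" for F
  proof -
    have "ennreal (sum g F) = (\<Sum>x\<in>F. ennreal (g x))" using assms(1) that by (simp add: subset_iff)
    also have "\<dots> \<le> (\<Sum>\<^sub>\<infinity>x\<in>A. ennreal (g x))"
      unfolding nonneg_infsum_complete[of A, OF zero_le] using that by (intro SUP_upper) auto
    also have "\<dots> \<le> ennreal R" by (rule assms(2))
    finally show ?thesis using assms(3) by simp
  qed
  then show "g summable_on A" "infsum g A \<le> R"
    using summable_on_if_finite_sums_le[of A g R] assms(1) by auto
qed

lemma ennreal_infsum_cmult: "(\<Sum>\<^sub>\<infinity>x\<in>A. c * (f x::ennreal)) = c * (\<Sum>\<^sub>\<infinity>x\<in>A. f x)"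
  unfolding nonneg_infsum_complete[of A, OF zero_le] SUP_mult_left_ennreal sum_distrib_left ..

lemma ennreal_infsum_add: "(\<Sum>\<^sub>\<infinity>x\<in>A. (f x::ennreal) + g x) = (\<Sum>\<^sub>\<infinity>x\<in>A. f x) + (\<Sum>\<^sub>\<infinity>x\<in>A. g x)"
  by (rule infsum_add) (simp_all add: nonneg_summable_on_complete)

lemma ennreal_infsum_mono: "(\<And>x. x \<in> A \<Longrightarrow> f x \<le> g x) \<Longrightarrow> (\<Sum>\<^sub>\<infinity>x\<in>A. (f x::ennreal)) \<le> (\<Sum>\<^sub>\<infinity>x\<in>A. g x)"
  by (rule infsum_mono) (simp_all add: nonneg_summable_on_complete)

lemma ennreal_infsum_swap_le:
  "(\<Sum>\<^sub>\<infinity>x\<in>A. \<Sum>\<^sub>\<infinity>y\<in>B. (f x y::ennreal)) \<le> (\<Sum>\<^sub>\<infinity>y\<in>B. \<Sum>\<^sub>\<infinity>x\<in>A. f x y)"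
proof -
  have "(\<Sum>x\<in>F. \<Sum>\<^sub>\<infinity>y\<in>B. f x y) \<le> (\<Sum>\<^sub>\<infinity>y\<in>B. \<Sum>\<^sub>\<infinity>x\<in>A. f x y)" if "finite F" "F \<subseteq> A" for F
  proof -
    have "(\<Sum>x\<in>F. \<Sum>\<^sub>\<infinity>y\<in>B. f x y) = (\<Sum>\<^sub>\<infinity>y\<in>B. \<Sum>x\<in>F. f x y)"
      using \<open>finite F\<close> by (induction F rule: finite_induct) (simp_all add: ennreal_infsum_add)
    also have "\<dots> \<le> (\<Sum>\<^sub>\<infinity>y\<in>B. \<Sum>\<^sub>\<infinity>x\<in>A. f x y)"
      unfolding nonneg_infsum_complete[of A, OF zero_le] using that
      by (intro ennreal_infsum_mono SUP_upper) auto
    finally show ?thesis .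
  qed
  then show ?thesis unfolding nonneg_infsum_complete[of A, OF zero_le] by (intro SUP_least) auto
qed

lemma ennreal_infsum_swap:
  "(\<Sum>\<^sub>\<infinity>x\<in>A. \<Sum>\<^sub>\<infinity>y\<in>B. (f x y::ennreal)) = (\<Sum>\<^sub>\<infinity>y\<in>B. \<Sum>\<^sub>\<infinity>x\<in>A. f x y)"
  by (intro antisym ennreal_infsum_swap_le)

definition hs_sum :: "'a::complex_inner set \<Rightarrow> ('a \<Rightarrow> 'a) \<Rightarrow> ennreal" where
  "hs_sum B T = (\<Sum>\<^sub>\<infinity>f\<in>B. ennreal ((norm (T f))\<^sup>2))"

lemma hs_norm_sq_eq_hs_sum: "hs_norm_sq T = hs_sum (SOME B. onb_set B) T"
  unfolding hs_norm_sq_def hs_sum_def ..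

context
  fixes B :: "'a::{complex_inner,complete_space} set"
  assumes B: "onb_set B"
begin

lemma onb_set_parseval: "((\<lambda>f. (cmod (cinner f x))\<^sup>2) has_sum (norm x)\<^sup>2) B"
proof -
  have "orthonormal_on B id" "closure (cspan (id ` B)) = UNIV"
    using B unfolding onb_set_def orthonormal_on_def by simp_all
  from parseval_identity[OF this, of x] show ?thesis by simp
qed

lemma ennreal_parseval: "(\<Sum>\<^sub>\<infinity>f\<in>B. ennreal ((cmod (cinner f x))\<^sup>2)) = ennreal ((norm x)\<^sup>2)"
  using ennreal_infsum_has_sum[OF onb_set_parseval] by simp

lemma ennreal_parseval': "(\<Sum>\<^sub>\<infinity>f\<in>B. ennreal ((cmod (cinner x f))\<^sup>2)) = ennreal ((norm x)\<^sup>2)"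
proof -
  have "cmod (cinner x f) = cmod (cinner f x)" for f by (subst cinner_commute) simp
  then show ?thesis using ennreal_parseval by simp
qed

lemma hs_sum_adjoint:
  assumes "\<And>f g. cinner g (S f) = cinner (S' g) f"
  shows "hs_sum B S = hs_sum B S'"
proof -
  have "cinner (S f) g = cinner f (S' g)" for f g
    using assms[of g f] cinner_commute[of "S f" g] cinner_commute[of f "S' g"] by simp
  then have "hs_sum B S = (\<Sum>\<^sub>\<infinity>f\<in>B. \<Sum>\<^sub>\<infinity>g\<in>B. ennreal ((cmod (cinner f (S' g)))\<^sup>2))"
    unfolding hs_sum_def ennreal_parseval'[symmetric] by simp
  also have "\<dots> = hs_sum B S'"
    unfolding hs_sum_def ennreal_parseval[symmetric] by (rule ennreal_infsum_swap)
  finally show ?thesis .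
qed

lemma hs_sum_le_imp_summable:
  assumes "hs_sum B T \<le> ennreal R" "R \<ge> 0"
  shows "(\<lambda>f. (norm (T f))\<^sup>2) summable_on B" "infsum (\<lambda>f. (norm (T f))\<^sup>2) B \<le> R"
  using ennreal_infsum_le_imp_summable[of B "\<lambda>f. (norm (T f))\<^sup>2" R] assms unfolding hs_sum_def by auto

lemma hs_sum_eq_infsum:
  "(\<lambda>f. (norm (T f))\<^sup>2) summable_on B \<Longrightarrow> hs_sum B T = ennreal (infsum (\<lambda>f. (norm (T f))\<^sup>2) B)"
  unfolding hs_sum_def by (rule ennreal_infsum_has_sum) (auto simp: has_sum_infsum)

lemma ennreal_sum_coefficients:
  assumes "riesz_upper K a A" "((\<lambda>n. (norm (a n))\<^sup>2) has_sum E) K"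
  shows "(\<Sum>\<^sub>\<infinity>f\<in>B. ennreal (infsum (\<lambda>n. (cmod (cinner (a n) f))\<^sup>2) K)) = ennreal E"
proof -
  have "(\<Sum>\<^sub>\<infinity>f\<in>B. ennreal (infsum (\<lambda>n. (cmod (cinner (a n) f))\<^sup>2) K))
      = (\<Sum>\<^sub>\<infinity>f\<in>B. \<Sum>\<^sub>\<infinity>n\<in>K. ennreal ((cmod (cinner (a n) f))\<^sup>2))"
    using bessel_summable[OF assms(1)]
    by (intro infsum_cong ennreal_infsum_has_sum[symmetric]) (auto simp: has_sum_infsum)
  also have "\<dots> = (\<Sum>\<^sub>\<infinity>n\<in>K. ennreal ((norm (a n))\<^sup>2))"
    by (subst ennreal_infsum_swap) (simp add: ennreal_parseval')
  also have "\<dots> = ennreal E" by (rule ennreal_infsum_has_sum[OF assms(2)]) simp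
  finally show ?thesis .
qed

lemma hs_sum_series_op_le:
  assumes "riesz_upper K a A" "riesz_upper K b Bb" "((\<lambda>n. (norm (a n))\<^sup>2) has_sum E) K"
  shows "hs_sum B (series_op K a b) \<le> ennreal (Bb * E)"
proof -
  have "Bb \<ge> 0" using assms(2) by (rule riesz_upper_nonneg)
  have "hs_sum B (series_op K a b)
      \<le> (\<Sum>\<^sub>\<infinity>f\<in>B. ennreal Bb * ennreal (infsum (\<lambda>n. (cmod (cinner (a n) f))\<^sup>2) K))"
    unfolding hs_sum_def
    using series_op_norm_le[OF assms(1,2)] \<open>Bb \<ge> 0\<close>
    by (intro ennreal_infsum_mono) (simp add: ennreal_leI flip: ennreal_mult')
  also have "\<dots> = ennreal (Bb * E)"
    using \<open>Bb \<ge> 0\<close> by (simp add: ennreal_infsum_cmult ennreal_sum_coefficients[OF assms(1,3)] ennreal_mult')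
  finally show ?thesis .
qed

lemma hs_sum_series_op_ge:
  assumes "riesz_upper K a A" "riesz_upper K b Bb" "riesz_lower K b Ab"
    and "((\<lambda>n. (norm (a n))\<^sup>2) has_sum E) K"
  shows "ennreal (Ab * E) \<le> hs_sum B (series_op K a b)"
proof -
  have "Ab > 0" using assms(3) by (rule riesz_lower_pos)
  have "Ab * infsum (\<lambda>n. (cmod (cinner (a n) f))\<^sup>2) K \<le> (norm (series_op K a b f))\<^sup>2" for f
  proof -
    have "infsum (\<lambda>n. (cmod (cinner (a n) f))\<^sup>2) K \<le> (norm (series_op K a b f))\<^sup>2 / Ab"
      using riesz_lower_limit_ge[OF assms(3) series_op_LIMSEQ[OF assms(1,2)]] \<open>Ab > 0\<close>
      by (intro summable_on_if_finite_sums_le(2)) (auto simp: field_simps)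
    then show ?thesis using \<open>Ab > 0\<close> by (simp add: field_simps)
  qed
  then have "(\<Sum>\<^sub>\<infinity>f\<in>B. ennreal Ab * ennreal (infsum (\<lambda>n. (cmod (cinner (a n) f))\<^sup>2) K))
      \<le> hs_sum B (series_op K a b)"
    unfolding hs_sum_def using \<open>Ab > 0\<close>
    by (intro ennreal_infsum_mono) (simp add: ennreal_leI flip: ennreal_mult')
  then show ?thesis
    using \<open>Ab > 0\<close> by (simp add: ennreal_infsum_cmult ennreal_sum_coefficients[OF assms(1,4)] ennreal_mult')
qed

end

lemma square_summable_lincomb:
  fixes \<alpha> \<beta> :: "nat \<Rightarrow> real"
  assumes "(\<lambda>n. (\<alpha> n)\<^sup>2) summable_on K" "(\<lambda>n. (\<beta> n)\<^sup>2) summable_on K"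
  shows "(\<lambda>n. (a * \<alpha> n + b * \<beta> n)\<^sup>2) summable_on K"
proof (rule summable_on_comparison_test)
  show "(\<lambda>n. 2 * a\<^sup>2 * (\<alpha> n)\<^sup>2 + 2 * b\<^sup>2 * (\<beta> n)\<^sup>2) summable_on K"
    using assms by (intro summable_on_add summable_on_cmult_right)
  show "(a * \<alpha> n + b * \<beta> n)\<^sup>2 \<le> 2 * a\<^sup>2 * (\<alpha> n)\<^sup>2 + 2 * b\<^sup>2 * (\<beta> n)\<^sup>2" for n
    using power2_norm_add_le[of "a * \<alpha> n" "b * \<beta> n"] by (simp add: power_mult_distrib)
qed simp

lemma le_of_forall_le_one_plus_mult:
  fixes x m :: real
  assumes "m \<ge> 0" and "\<And>t. t > 0 \<Longrightarrow> x \<le> (1 + t) * m"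
  shows "x \<le> m"
proof (rule field_le_epsilon)
  fix \<epsilon> :: real assume "\<epsilon> > 0"
  have "x \<le> (1 + \<epsilon> / (m + 1)) * m" using assms(2)[of "\<epsilon> / (m + 1)"] \<open>\<epsilon> > 0\<close> assms(1) by simp
  also have "\<dots> \<le> m + \<epsilon>"
    using \<open>\<epsilon> > 0\<close> assms(1) by (simp add: field_simps)
  finally show "x \<le> m + \<epsilon>" .
qed

text \<open>Completeness of \<open>\<ell>\<^sup>2(K)\<close>, in the form needed for a minimising sequence.\<close>

context
  fixes A :: "nat \<Rightarrow> nat \<Rightarrow> real" and K :: "nat set" and \<epsilon> :: "nat \<Rightarrow> real"
  assumes A: "\<And>k. (\<lambda>n. (A k n)\<^sup>2) summable_on K"
    and Cauchy: "\<And>j k. infsum (\<lambda>n. (A j n - A k n)\<^sup>2) K \<le> \<epsilon> j + \<epsilon> k"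
    and \<epsilon>: "\<epsilon> \<longlonglongrightarrow> 0"
begin

lemma square_summable_Cauchy_finite_sums:
  assumes "finite F" "F \<subseteq> K"
  shows "(\<Sum>n\<in>F. (A j n - A k n)\<^sup>2) \<le> \<epsilon> j + \<epsilon> k"
proof -
  have "(\<lambda>n. (A j n - A k n)\<^sup>2) summable_on K"
    using square_summable_lincomb[OF A A, of 1 j "-1" k] by simp
  then have "(\<Sum>n\<in>F. (A j n - A k n)\<^sup>2) \<le> infsum (\<lambda>n. (A j n - A k n)\<^sup>2) K"
    by (rule finite_sum_le_has_sum[OF has_sum_infsum assms]) simp
  then show ?thesis using Cauchy[of j k] by linarith
qed

lemma square_summable_Cauchy_pointwise:
  assumes "n \<in> K"
  shows "Cauchy (\<lambda>k. A k n)"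
proof (rule metric_CauchyI)
  fix e :: real assume "e > 0"
  then obtain N where N: "\<forall>k\<ge>N. \<bar>\<epsilon> k\<bar> < e\<^sup>2 / 2"
    using \<epsilon> unfolding LIMSEQ_def dist_real_def by (metis diff_zero half_gt_zero zero_less_power)
  have "dist (A j n) (A k n) < e" if "j \<ge> N" "k \<ge> N" for j k
  proof -
    have "(A j n - A k n)\<^sup>2 \<le> \<epsilon> j + \<epsilon> k"
      using square_summable_Cauchy_finite_sums[of "{n}" j k] assms by simp
    moreover have "\<bar>\<epsilon> j\<bar> < e\<^sup>2 / 2" "\<bar>\<epsilon> k\<bar> < e\<^sup>2 / 2" using N that by auto
    ultimately have "(A j n - A k n)\<^sup>2 < e\<^sup>2" by linarith
    then show ?thesis using \<open>e > 0\<close> by (simp add: dist_real_def power2_less_imp_less)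
  qed
  then show "\<exists>N. \<forall>j\<ge>N. \<forall>k\<ge>N. dist (A j n) (A k n) < e" by blast
qed

lemma square_summable_Cauchy_limit:
  obtains a where "\<And>n. n \<in> K \<Longrightarrow> (\<lambda>k. A k n) \<longlonglongrightarrow> a n"
    "\<And>k. (\<lambda>n. (a n - A k n)\<^sup>2) summable_on K" "\<And>k. infsum (\<lambda>n. (a n - A k n)\<^sup>2) K \<le> \<epsilon> k"
proof -
  have lim: "(\<lambda>k. A k n) \<longlonglongrightarrow> lim (\<lambda>k. A k n)" if "n \<in> K" for n
    using square_summable_Cauchy_pointwise[OF that] by (simp add: Cauchy_convergent_iff convergent_LIMSEQ_iff)
  have "(\<Sum>n\<in>F. (lim (\<lambda>j. A j n) - A k n)\<^sup>2) \<le> 0 + \<epsilon> k" if "finite F" "F \<subseteq> K" for F k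
  proof (rule LIMSEQ_le)
    show "(\<lambda>j. \<Sum>n\<in>F. (A j n - A k n)\<^sup>2) \<longlonglongrightarrow> (\<Sum>n\<in>F. (lim (\<lambda>j. A j n) - A k n)\<^sup>2)"
      using that by (intro tendsto_sum tendsto_power tendsto_diff tendsto_const lim) auto
    show "(\<lambda>j. \<epsilon> j + \<epsilon> k) \<longlonglongrightarrow> 0 + \<epsilon> k" by (intro tendsto_add \<epsilon> tendsto_const)
    show "\<exists>N. \<forall>j\<ge>N. (\<Sum>n\<in>F. (A j n - A k n)\<^sup>2) \<le> \<epsilon> j + \<epsilon> k"
      using square_summable_Cauchy_finite_sums[OF that] by blast
  qed
  then have "(\<lambda>n. (lim (\<lambda>j. A j n) - A k n)\<^sup>2) summable_on K"
    "infsum (\<lambda>n. (lim (\<lambda>j. A j n) - A k n)\<^sup>2) K \<le> \<epsilon> k" for k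
    using summable_on_if_finite_sums_le[of K "\<lambda>n. (lim (\<lambda>j. A j n) - A k n)\<^sup>2" "\<epsilon> k"] by simp_all
  with lim show ?thesis by (rule that)
qed

end

section \<open>The operators \<open>\<Theta>\<^sub>\<alpha>\<close>\<close>

locale bari_basis =
  fixes K :: "nat set" and \<psi> \<omega> \<phi> :: "nat \<Rightarrow> 'a::{complex_inner,complete_space}"
  assumes psi_basis: "is_basis K \<psi>"
    and omega_onb: "orthonormal_basis K \<omega>"
    and psi_close: "(\<lambda>n. (norm (\<psi> n - \<omega> n))\<^sup>2) summable_on K"
    and biorth: "biorthogonal K \<psi> \<phi>"
    and phi_norm: "\<And>n. n \<in> K \<Longrightarrow> norm (\<phi> n) = 1"
begin

definition Bpsi :: real where "Bpsi = 2 + 2 * infsum (\<lambda>n. (norm (\<psi> n - \<omega> n))\<^sup>2) K"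

lemma psi_upper: "riesz_upper K \<psi> Bpsi"
  unfolding Bpsi_def by (rule riesz_upper_quadratically_close[OF omega_onb has_sum_infsum[OF psi_close]])

lemma Bpsi_pos: "Bpsi > 0"
  unfolding Bpsi_def by (simp add: add_pos_nonneg infsum_nonneg)

definition Aphi :: real where "Aphi = 1 / Bpsi"

lemma phi_lower: "riesz_lower K \<phi> Aphi"
  unfolding Aphi_def by (rule riesz_lower_biorthogonal[OF psi_upper Bpsi_pos biorth])

definition Bphi :: real where "Bphi = 1 / (SOME A. riesz_lower K \<psi> A)"

lemma phi_upper: "riesz_upper K \<phi> Bphi"
proof -
  have "riesz_lower K \<psi> (SOME A. riesz_lower K \<psi> A)"
    using riesz_lower_quadratically_close_basis[OF omega_onb has_sum_infsum[OF psi_close] psi_basis]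
    by (rule someI_ex)
  then show ?thesis unfolding Bphi_def by (rule riesz_upper_biorthogonal[OF _ psi_basis biorth])
qed

definition Ephi :: real where "Ephi = infsum (\<lambda>n. (norm (\<phi> n - \<omega> n))\<^sup>2) K"

lemma phi_close: "((\<lambda>n. (norm (\<phi> n - \<omega> n))\<^sup>2) has_sum Ephi) K"
  unfolding Ephi_def
  using biorthogonal_quadratically_close(1)[OF omega_onb biorth phi_upper has_sum_infsum[OF psi_close]]
  by (rule has_sum_infsum)

lemma Ephi_nonneg: "Ephi \<ge> 0"
  unfolding Ephi_def by (simp add: infsum_nonneg)

definition hs_basis :: "'a set" where "hs_basis = (SOME B. onb_set B)"

lemma onb_set_hs_basis: "onb_set hs_basis"
  unfolding hs_basis_def by (rule someI[of onb_set, OF orthonormal_basis_onb_set[OF omega_onb]])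

lemma scaled_phi_upper:
  assumes "((\<lambda>n. (\<alpha> n)\<^sup>2) has_sum Q) K"
  shows "riesz_upper K (\<lambda>n. \<alpha> n *\<^sub>R \<phi> n) Q"
proof (rule riesz_upper_square_summable)
  show "((\<lambda>n. (norm (\<alpha> n *\<^sub>R \<phi> n))\<^sup>2) has_sum Q) K"
    using assms by (subst has_sum_cong[where g="\<lambda>n. (\<alpha> n)\<^sup>2"]) (simp_all add: phi_norm)
qed

text \<open>\<open>\<Sum>\<^sub>n \<langle>\<phi>\<^sub>n, \<cdot>\<rangle> \<phi>\<^sub>n - I\<close> is Hilbert--Schmidt because \<open>\<phi>\<^sub>n - \<omega>\<^sub>n\<close> is square summable.\<close>

lemma frame_op_minus_id:
  "series_op K \<phi> \<phi> x - x = series_op K \<phi> (\<lambda>n. \<phi> n - \<omega> n) x + series_op K (\<lambda>n. \<phi> n - \<omega> n) \<omega> x"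
proof -
  have e: "riesz_upper K (\<lambda>n. \<phi> n - \<omega> n) Ephi" by (rule riesz_upper_square_summable[OF phi_close])
  have \<omega>: "riesz_upper K \<omega> 1" by (rule riesz_upper_orthonormal[OF orthonormal_basis_orthonormal_on[OF omega_onb]])
  have summand: "cinner (\<phi> n) x *\<^sub>C \<phi> n - cinner (\<omega> n) x *\<^sub>C \<omega> n
      = cinner (\<phi> n) x *\<^sub>C (\<phi> n - \<omega> n) + cinner (\<phi> n - \<omega> n) x *\<^sub>C \<omega> n" for n
    by (simp add: scaleC_diff_right scaleC_diff_left cinner_diff_left)
  have "Kpsum K (\<lambda>n. cinner (\<phi> n) x *\<^sub>C \<phi> n) m - Kpsum K (\<lambda>n. cinner (\<omega> n) x *\<^sub>C \<omega> n) m
      = Kpsum K (\<lambda>n. cinner (\<phi> n) x *\<^sub>C (\<phi> n - \<omega> n)) m + Kpsum K (\<lambda>n. cinner (\<phi> n - \<omega> n) x *\<^sub>C \<omega> n) m" for m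
    unfolding Kpsum_def sum_subtractf[symmetric] sum.distrib[symmetric] summand ..
  moreover have "(\<lambda>m. Kpsum K (\<lambda>n. cinner (\<phi> n) x *\<^sub>C \<phi> n) m - Kpsum K (\<lambda>n. cinner (\<omega> n) x *\<^sub>C \<omega> n) m)
      \<longlonglongrightarrow> series_op K \<phi> \<phi> x - x"
    by (intro tendsto_diff series_op_LIMSEQ[OF phi_upper phi_upper] orthonormal_basis_expansion[OF omega_onb])
  ultimately have "(\<lambda>m. Kpsum K (\<lambda>n. cinner (\<phi> n) x *\<^sub>C (\<phi> n - \<omega> n)) m + Kpsum K (\<lambda>n. cinner (\<phi> n - \<omega> n) x *\<^sub>C \<omega> n) m)
      \<longlonglongrightarrow> series_op K \<phi> \<phi> x - x"
    by simp
  moreover have "(\<lambda>m. Kpsum K (\<lambda>n. cinner (\<phi> n) x *\<^sub>C (\<phi> n - \<omega> n)) m + Kpsum K (\<lambda>n. cinner (\<phi> n - \<omega> n) x *\<^sub>C \<omega> n) m)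
      \<longlonglongrightarrow> series_op K \<phi> (\<lambda>n. \<phi> n - \<omega> n) x + series_op K (\<lambda>n. \<phi> n - \<omega> n) \<omega> x"
    by (intro tendsto_add series_op_LIMSEQ[OF phi_upper e] series_op_LIMSEQ[OF e \<omega>])
  ultimately show ?thesis by (rule LIMSEQ_unique)
qed

lemma hs_frame_op_minus_id:
  "hs_sum hs_basis (\<lambda>x. series_op K \<phi> \<phi> x - x) \<le> ennreal (2 * Bphi * Ephi + 2 * Ephi)"
proof -
  let ?e = "\<lambda>n. \<phi> n - \<omega> n"
  have e: "riesz_upper K ?e Ephi" by (rule riesz_upper_square_summable[OF phi_close])
  have \<omega>: "riesz_upper K \<omega> 1" by (rule riesz_upper_orthonormal[OF orthonormal_basis_orthonormal_on[OF omega_onb]])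
  have "hs_sum hs_basis (\<lambda>x. series_op K \<phi> \<phi> x - x)
      \<le> (\<Sum>\<^sub>\<infinity>f\<in>hs_basis. 2 * ennreal ((norm (series_op K \<phi> ?e f))\<^sup>2) + 2 * ennreal ((norm (series_op K ?e \<omega> f))\<^sup>2))"
    unfolding hs_sum_def frame_op_minus_id
  proof (rule ennreal_infsum_mono)
    fix f
    let ?a = "series_op K \<phi> ?e f" and ?b = "series_op K ?e \<omega> f"
    have "ennreal ((norm (?a + ?b))\<^sup>2) \<le> ennreal (2 * (norm ?a)\<^sup>2 + 2 * (norm ?b)\<^sup>2)"
      by (rule ennreal_leI[OF power2_norm_add_le])
    then show "ennreal ((norm (?a + ?b))\<^sup>2) \<le> 2 * ennreal ((norm ?a)\<^sup>2) + 2 * ennreal ((norm ?b)\<^sup>2)"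
      by (simp add: ennreal_plus ennreal_mult')
  qed
  also have "\<dots> = 2 * hs_sum hs_basis (series_op K \<phi> ?e) + 2 * hs_sum hs_basis (series_op K ?e \<omega>)"
    by (simp add: hs_sum_def ennreal_infsum_add ennreal_infsum_cmult)
  also have "hs_sum hs_basis (series_op K \<phi> ?e) = hs_sum hs_basis (series_op K ?e \<phi>)"
    by (rule hs_sum_adjoint[OF onb_set_hs_basis series_op_adjoint[OF phi_upper e]])
  also have "2 * hs_sum hs_basis (series_op K ?e \<phi>) + 2 * hs_sum hs_basis (series_op K ?e \<omega>)
      \<le> 2 * ennreal (Bphi * Ephi) + 2 * ennreal (1 * Ephi)"
    by (intro add_mono mult_left_mono hs_sum_series_op_le[OF onb_set_hs_basis e] phi_upper \<omega> phi_close) auto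
  also have "\<dots> = ennreal (2 * Bphi * Ephi + 2 * Ephi)"
    using riesz_upper_nonneg[OF phi_upper] Ephi_nonneg by (simp add: ennreal_mult' ennreal_plus mult.assoc)
  finally show ?thesis .
qed

definition diag_op :: "(nat \<Rightarrow> real) \<Rightarrow> 'a \<Rightarrow> 'a" where
  "diag_op \<alpha> = series_op K (\<lambda>n. \<alpha> n *\<^sub>R \<phi> n) \<phi>"

lemma diag_op_add:
  assumes "(\<lambda>n. (\<alpha> n)\<^sup>2) summable_on K" "(\<lambda>n. (\<beta> n)\<^sup>2) summable_on K"
  shows "diag_op (\<lambda>n. \<alpha> n + \<beta> n) x = diag_op \<alpha> x + diag_op \<beta> x"
  unfolding diag_op_def scaleR_add_left
  by (rule series_op_add_left[OF scaled_phi_upper[OF has_sum_infsum[OF assms(1)]]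
        scaled_phi_upper[OF has_sum_infsum[OF assms(2)]] phi_upper])

lemma theta_op_eq:
  assumes "(\<lambda>n. (\<alpha> n)\<^sup>2) summable_on K"
  shows "theta_op K \<phi> \<alpha> x = series_op K \<phi> \<phi> x + diag_op \<alpha> x"
proof -
  have "theta_op K \<phi> \<alpha> x = series_op K (\<lambda>n. \<phi> n + \<alpha> n *\<^sub>R \<phi> n) \<phi> x"
    by (simp add: theta_op_def series_op_def Ksum_eq_lim_Kpsum Kpsum_def cinner_add_left
        cinner_scaleR_left scaleC_scaleC algebra_simps)
  also have "\<dots> = series_op K \<phi> \<phi> x + diag_op \<alpha> x"
    unfolding diag_op_def
    by (rule series_op_add_left[OF phi_upper scaled_phi_upper[OF has_sum_infsum[OF assms]] phi_upper])
  finally show ?thesis .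
qed

lemma hs_diag_op_bounds:
  assumes "((\<lambda>n. (\<alpha> n)\<^sup>2) has_sum Q) K"
  shows "hs_sum hs_basis (diag_op \<alpha>) \<le> ennreal (Bphi * Q)"
    and "ennreal (Aphi * Q) \<le> hs_sum hs_basis (diag_op \<alpha>)"
proof -
  have "((\<lambda>n. (norm (\<alpha> n *\<^sub>R \<phi> n))\<^sup>2) has_sum Q) K"
    using assms by (subst has_sum_cong[where g="\<lambda>n. (\<alpha> n)\<^sup>2"]) (simp_all add: phi_norm)
  then show "hs_sum hs_basis (diag_op \<alpha>) \<le> ennreal (Bphi * Q)"
    "ennreal (Aphi * Q) \<le> hs_sum hs_basis (diag_op \<alpha>)"
    unfolding diag_op_def
    by (rule hs_sum_series_op_le[OF onb_set_hs_basis scaled_phi_upper[OF assms] phi_upper],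
        rule hs_sum_series_op_ge[OF onb_set_hs_basis scaled_phi_upper[OF assms] phi_upper phi_lower])
qed

section \<open>The variational problem\<close>

definition hs_dist :: "(nat \<Rightarrow> real) \<Rightarrow> real" where
  "hs_dist \<alpha> = infsum (\<lambda>f. (norm (theta_op K \<phi> \<alpha> f - f))\<^sup>2) hs_basis"

definition hs_diag :: "(nat \<Rightarrow> real) \<Rightarrow> real" where
  "hs_diag \<delta> = infsum (\<lambda>f. (norm (diag_op \<delta> f))\<^sup>2) hs_basis"

lemma hs_diag_bounds:
  assumes "(\<lambda>n. (\<delta> n)\<^sup>2) summable_on K"
  shows "(\<lambda>f. (norm (diag_op \<delta> f))\<^sup>2) summable_on hs_basis"
    and "hs_diag \<delta> \<le> Bphi * infsum (\<lambda>n. (\<delta> n)\<^sup>2) K"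
    and "Aphi * infsum (\<lambda>n. (\<delta> n)\<^sup>2) K \<le> hs_diag \<delta>"
proof -
  note bounds = hs_diag_op_bounds[OF has_sum_infsum[OF assms]]
  have nonneg: "Bphi * infsum (\<lambda>n. (\<delta> n)\<^sup>2) K \<ge> 0" "Aphi * infsum (\<lambda>n. (\<delta> n)\<^sup>2) K \<ge> 0"
    using riesz_upper_nonneg[OF phi_upper] riesz_lower_pos[OF phi_lower] by (simp_all add: infsum_nonneg)
  show summable: "(\<lambda>f. (norm (diag_op \<delta> f))\<^sup>2) summable_on hs_basis"
    and "hs_diag \<delta> \<le> Bphi * infsum (\<lambda>n. (\<delta> n)\<^sup>2) K"
    unfolding hs_diag_def using hs_sum_le_imp_summable[OF onb_set_hs_basis bounds(1) nonneg(1)] by simp_all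
  show "Aphi * infsum (\<lambda>n. (\<delta> n)\<^sup>2) K \<le> hs_diag \<delta>"
    using bounds(2) nonneg(2) unfolding hs_sum_eq_infsum[OF onb_set_hs_basis summable] hs_diag_def
    by (simp add: infsum_nonneg)
qed

lemma theta_minus_id_eq:
  "(\<lambda>n. (\<alpha> n)\<^sup>2) summable_on K \<Longrightarrow> theta_op K \<phi> \<alpha> f - f = (series_op K \<phi> \<phi> f - f) + diag_op \<alpha> f"
  by (simp add: theta_op_eq)

lemma theta_minus_id_summable:
  assumes "(\<lambda>n. (\<alpha> n)\<^sup>2) summable_on K"
  shows "(\<lambda>f. (norm (theta_op K \<phi> \<alpha> f - f))\<^sup>2) summable_on hs_basis"
proof (rule summable_on_comparison_test)
  have "(\<lambda>f. (norm (series_op K \<phi> \<phi> f - f))\<^sup>2) summable_on hs_basis"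
    using hs_sum_le_imp_summable(1)[OF onb_set_hs_basis hs_frame_op_minus_id]
      riesz_upper_nonneg[OF phi_upper] Ephi_nonneg
    by simp
  then show "(\<lambda>f. 2 * (norm (series_op K \<phi> \<phi> f - f))\<^sup>2 + 2 * (norm (diag_op \<alpha> f))\<^sup>2) summable_on hs_basis"
    by (intro summable_on_add summable_on_cmult_right hs_diag_bounds(1)[OF assms])
  show "(norm (theta_op K \<phi> \<alpha> f - f))\<^sup>2 \<le> 2 * (norm (series_op K \<phi> \<phi> f - f))\<^sup>2 + 2 * (norm (diag_op \<alpha> f))\<^sup>2" for f
    unfolding theta_minus_id_eq[OF assms] by (rule power2_norm_add_le)
qed simp

lemma hs_norm_theta_minus_id:
  assumes "(\<lambda>n. (\<alpha> n)\<^sup>2) summable_on K"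
  shows "hs_norm (\<lambda>x. theta_op K \<phi> \<alpha> x - x) = ennreal (sqrt (hs_dist \<alpha>))"
proof -
  have "hs_norm_sq (\<lambda>x. theta_op K \<phi> \<alpha> x - x) = ennreal (hs_dist \<alpha>)"
    unfolding hs_norm_sq_eq_hs_sum hs_basis_def[symmetric] hs_dist_def
    by (rule hs_sum_eq_infsum[OF onb_set_hs_basis theta_minus_id_summable[OF assms]])
  then show ?thesis by (simp add: hs_norm_def hs_dist_def infsum_nonneg)
qed

lemma hs_dist_nonneg: "hs_dist \<alpha> \<ge> 0"
  unfolding hs_dist_def by (simp add: infsum_nonneg)

lemma theta_minus_id_diff:
  assumes "(\<lambda>n. (\<alpha> n)\<^sup>2) summable_on K" "(\<lambda>n. (\<beta> n)\<^sup>2) summable_on K"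
  shows "theta_op K \<phi> \<alpha> f - f = (theta_op K \<phi> \<beta> f - f) + diag_op (\<lambda>n. \<alpha> n - \<beta> n) f"
proof -
  have "(\<lambda>n. (\<alpha> n - \<beta> n)\<^sup>2) summable_on K"
    using square_summable_lincomb[OF assms, of 1 "-1"] by simp
  then have "diag_op (\<lambda>n. (\<alpha> n - \<beta> n) + \<beta> n) f = diag_op (\<lambda>n. \<alpha> n - \<beta> n) f + diag_op \<beta> f"
    by (rule diag_op_add[OF _ assms(2)])
  then show ?thesis by (simp add: theta_minus_id_eq assms)
qed

lemma theta_minus_id_midpoint:
  assumes "(\<lambda>n. (\<alpha> n)\<^sup>2) summable_on K" "(\<lambda>n. (\<beta> n)\<^sup>2) summable_on K"
  shows "theta_op K \<phi> (\<lambda>n. (\<alpha> n + \<beta> n) / 2) f - f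
           = (1/2) *\<^sub>R ((theta_op K \<phi> \<alpha> f - f) + (theta_op K \<phi> \<beta> f - f))"
proof -
  let ?\<mu> = "\<lambda>n. (\<alpha> n + \<beta> n) / 2"
  have \<mu>: "(\<lambda>n. (?\<mu> n)\<^sup>2) summable_on K"
    using square_summable_lincomb[OF assms, of "1/2" "1/2"] by (simp add: add_divide_distrib)
  have "diag_op ?\<mu> f + diag_op ?\<mu> f = diag_op (\<lambda>n. ?\<mu> n + ?\<mu> n) f"
    by (rule diag_op_add[OF \<mu> \<mu>, symmetric])
  also have "\<dots> = diag_op \<alpha> f + diag_op \<beta> f"
    using diag_op_add[OF assms] by simp
  finally have "diag_op ?\<mu> f = (1/2) *\<^sub>R (diag_op \<alpha> f + diag_op \<beta> f)"
    by (metis scaleR_half_double)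
  moreover have "(1/2) *\<^sub>R ((X + diag_op \<alpha> f) + (X + diag_op \<beta> f))
      = X + (1/2) *\<^sub>R (diag_op \<alpha> f + diag_op \<beta> f)" for X :: 'a
  proof -
    have regroup: "(X + diag_op \<alpha> f) + (X + diag_op \<beta> f) = (X + X) + (diag_op \<alpha> f + diag_op \<beta> f)"
      by (simp add: add_ac)
    show ?thesis by (simp only: regroup scaleR_add_right[of "1/2" "X + X"] scaleR_half_double)
  qed
  ultimately show ?thesis
    unfolding theta_minus_id_eq[OF \<mu>] theta_minus_id_eq[OF assms(1)] theta_minus_id_eq[OF assms(2)]
    by simp
qed

text \<open>\<open>\<alpha> \<mapsto> \<parallel>\<Theta>\<^sub>\<alpha> - I\<parallel>\<^sub>2\<^sup>2\<close> is a quadratic functional whose second-order part dominates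
  \<open>\<parallel>\<alpha>\<parallel>\<^sub>\<ell>\<^sub>2\<^sup>2\<close>: this is the source of both existence and uniqueness of the minimiser.\<close>

lemma hs_dist_parallelogram:
  assumes "(\<lambda>n. (\<alpha> n)\<^sup>2) summable_on K" "(\<lambda>n. (\<beta> n)\<^sup>2) summable_on K"
  shows "hs_dist \<alpha> + hs_dist \<beta> = 2 * hs_dist (\<lambda>n. (\<alpha> n + \<beta> n) / 2) + (1/2) * hs_diag (\<lambda>n. \<alpha> n - \<beta> n)"
proof -
  have \<mu>: "(\<lambda>n. ((\<alpha> n + \<beta> n) / 2)\<^sup>2) summable_on K"
    using square_summable_lincomb[OF assms, of "1/2" "1/2"] by (simp add: add_divide_distrib)
  have \<delta>: "(\<lambda>n. (\<alpha> n - \<beta> n)\<^sup>2) summable_on K"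
    using square_summable_lincomb[OF assms, of 1 "-1"] by simp
  have pointwise: "(norm (theta_op K \<phi> \<alpha> f - f))\<^sup>2 + (norm (theta_op K \<phi> \<beta> f - f))\<^sup>2
      = 2 * (norm (theta_op K \<phi> (\<lambda>n. (\<alpha> n + \<beta> n) / 2) f - f))\<^sup>2
        + (1/2) * (norm (diag_op (\<lambda>n. \<alpha> n - \<beta> n) f))\<^sup>2" for f
    unfolding theta_minus_id_midpoint[OF assms] parallelogram_law_midpoint
    by (simp add: theta_minus_id_diff[OF assms, of f])
  have "hs_dist \<alpha> + hs_dist \<beta>
      = infsum (\<lambda>f. (norm (theta_op K \<phi> \<alpha> f - f))\<^sup>2 + (norm (theta_op K \<phi> \<beta> f - f))\<^sup>2) hs_basis"
    unfolding hs_dist_def by (rule infsum_add[symmetric]) (intro theta_minus_id_summable assms)+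
  also have "\<dots> = infsum (\<lambda>f. 2 * (norm (theta_op K \<phi> (\<lambda>n. (\<alpha> n + \<beta> n) / 2) f - f))\<^sup>2) hs_basis
      + infsum (\<lambda>f. (1/2) * (norm (diag_op (\<lambda>n. \<alpha> n - \<beta> n) f))\<^sup>2) hs_basis"
    unfolding pointwise
    by (intro infsum_add summable_on_cmult_right theta_minus_id_summable[OF \<mu>] hs_diag_bounds(1)[OF \<delta>])
  also have "\<dots> = 2 * hs_dist (\<lambda>n. (\<alpha> n + \<beta> n) / 2) + (1/2) * hs_diag (\<lambda>n. \<alpha> n - \<beta> n)"
    unfolding hs_dist_def hs_diag_def
    by (intro arg_cong2[where f="(+)"] infsum_cmult_right theta_minus_id_summable[OF \<mu>] hs_diag_bounds(1)[OF \<delta>])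
  finally show ?thesis .
qed

lemma hs_dist_perturb:
  assumes "(\<lambda>n. (\<alpha> n)\<^sup>2) summable_on K" "(\<lambda>n. (\<beta> n)\<^sup>2) summable_on K" "t > 0"
  shows "hs_dist \<alpha> \<le> (1 + t) * hs_dist \<beta> + (1 + 1/t) * hs_diag (\<lambda>n. \<alpha> n - \<beta> n)"
proof -
  have \<delta>: "(\<lambda>n. (\<alpha> n - \<beta> n)\<^sup>2) summable_on K"
    using square_summable_lincomb[OF assms(1,2), of 1 "-1"] by simp
  have "hs_dist \<alpha> \<le> infsum (\<lambda>f. (1 + t) * (norm (theta_op K \<phi> \<beta> f - f))\<^sup>2
      + (1 + 1/t) * (norm (diag_op (\<lambda>n. \<alpha> n - \<beta> n) f))\<^sup>2) hs_basis"
    unfolding hs_dist_def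
  proof (rule infsum_mono)
    show "(\<lambda>f. (norm (theta_op K \<phi> \<alpha> f - f))\<^sup>2) summable_on hs_basis"
      by (rule theta_minus_id_summable[OF assms(1)])
    show "(\<lambda>f. (1 + t) * (norm (theta_op K \<phi> \<beta> f - f))\<^sup>2
        + (1 + 1/t) * (norm (diag_op (\<lambda>n. \<alpha> n - \<beta> n) f))\<^sup>2) summable_on hs_basis"
      by (intro summable_on_add summable_on_cmult_right theta_minus_id_summable hs_diag_bounds(1) assms \<delta>)
    show "(norm (theta_op K \<phi> \<alpha> f - f))\<^sup>2 \<le> (1 + t) * (norm (theta_op K \<phi> \<beta> f - f))\<^sup>2
        + (1 + 1/t) * (norm (diag_op (\<lambda>n. \<alpha> n - \<beta> n) f))\<^sup>2" for f
      unfolding theta_minus_id_diff[OF assms(1,2), of f] by (rule power2_norm_add_le_weighted[OF assms(3)])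
  qed
  also have "\<dots> = infsum (\<lambda>f. (1 + t) * (norm (theta_op K \<phi> \<beta> f - f))\<^sup>2) hs_basis
      + infsum (\<lambda>f. (1 + 1/t) * (norm (diag_op (\<lambda>n. \<alpha> n - \<beta> n) f))\<^sup>2) hs_basis"
    by (intro infsum_add summable_on_cmult_right theta_minus_id_summable[OF assms(2)] hs_diag_bounds(1)[OF \<delta>])
  also have "\<dots> = (1 + t) * hs_dist \<beta> + (1 + 1/t) * hs_diag (\<lambda>n. \<alpha> n - \<beta> n)"
    unfolding hs_dist_def hs_diag_def
    by (intro arg_cong2[where f="(+)"] infsum_cmult_right theta_minus_id_summable[OF assms(2)] hs_diag_bounds(1)[OF \<delta>])
  finally show ?thesis .
qed

definition admissible :: "(nat \<Rightarrow> real) \<Rightarrow> bool" where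
  "admissible \<alpha> \<longleftrightarrow> (\<forall>n\<in>K. \<alpha> n \<ge> -1) \<and> (\<lambda>n. (\<alpha> n)\<^sup>2) summable_on K"

lemma frakC_eq: "frakC K \<phi> = theta_op K \<phi> ` Collect admissible"
  unfolding frakC_def admissible_def by blast

lemma admissible_midpoint:
  assumes "admissible \<alpha>" "admissible \<beta>"
  shows "admissible (\<lambda>n. (\<alpha> n + \<beta> n) / 2)"
proof -
  have "(\<lambda>n. ((1/2) * \<alpha> n + (1/2) * \<beta> n)\<^sup>2) summable_on K"
    using assms unfolding admissible_def by (intro square_summable_lincomb) auto
  moreover have "-1 \<le> (\<alpha> n + \<beta> n) / 2" if "n \<in> K" for n
    using assms that unfolding admissible_def by fastforce
  ultimately show ?thesis unfolding admissible_def by (simp add: add_divide_distrib)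
qed

lemma admissible_zero: "admissible (\<lambda>_. 0)"
  by (simp add: admissible_def)

definition min_hs_dist :: real where "min_hs_dist = Inf (hs_dist ` Collect admissible)"

lemma min_hs_dist_le: "admissible \<alpha> \<Longrightarrow> min_hs_dist \<le> hs_dist \<alpha>"
  unfolding min_hs_dist_def by (rule cInf_lower) (auto intro: bdd_belowI[of _ 0] hs_dist_nonneg)

lemma min_hs_dist_nonneg: "min_hs_dist \<ge> 0"
  unfolding min_hs_dist_def using admissible_zero by (intro cInf_greatest) (auto simp: hs_dist_nonneg)

lemma admissible_dist_le:
  assumes "admissible \<alpha>" "admissible \<beta>"
  shows "Aphi * infsum (\<lambda>n. (\<alpha> n - \<beta> n)\<^sup>2) K \<le> 2 * (hs_dist \<alpha> + hs_dist \<beta> - 2 * min_hs_dist)"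
proof -
  have "(\<lambda>n. (\<alpha> n - \<beta> n)\<^sup>2) summable_on K"
    using assms square_summable_lincomb[of \<alpha> K \<beta> 1 "-1"] by (simp add: admissible_def)
  then have "Aphi * infsum (\<lambda>n. (\<alpha> n - \<beta> n)\<^sup>2) K \<le> hs_diag (\<lambda>n. \<alpha> n - \<beta> n)"
    by (rule hs_diag_bounds(3))
  moreover have "min_hs_dist \<le> hs_dist (\<lambda>n. (\<alpha> n + \<beta> n) / 2)"
    by (rule min_hs_dist_le[OF admissible_midpoint[OF assms]])
  moreover have "hs_dist \<alpha> + hs_dist \<beta> = 2 * hs_dist (\<lambda>n. (\<alpha> n + \<beta> n) / 2) + (1/2) * hs_diag (\<lambda>n. \<alpha> n - \<beta> n)"
    using assms unfolding admissible_def by (intro hs_dist_parallelogram) auto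
  ultimately show ?thesis by argo
qed

lemma admissible_minimisers_eq:
  assumes "admissible \<alpha>" "admissible \<beta>" "hs_dist \<alpha> \<le> min_hs_dist" "hs_dist \<beta> \<le> min_hs_dist" "n \<in> K"
  shows "\<alpha> n = \<beta> n"
proof -
  have "(\<lambda>n. (\<alpha> n - \<beta> n)\<^sup>2) summable_on K"
    using assms square_summable_lincomb[of \<alpha> K \<beta> 1 "-1"] by (simp add: admissible_def)
  then have "(\<Sum>i\<in>{n}. (\<alpha> i - \<beta> i)\<^sup>2) \<le> infsum (\<lambda>n. (\<alpha> n - \<beta> n)\<^sup>2) K"
    by (rule finite_sum_le_has_sum[OF has_sum_infsum]) (use \<open>n \<in> K\<close> in auto)
  then have "(\<alpha> n - \<beta> n)\<^sup>2 \<le> infsum (\<lambda>n. (\<alpha> n - \<beta> n)\<^sup>2) K" by simp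
  also have "\<dots> \<le> 0"
  proof -
    have "Aphi * infsum (\<lambda>n. (\<alpha> n - \<beta> n)\<^sup>2) K \<le> 0"
      using admissible_dist_le[OF assms(1,2)] assms(3,4) by argo
    then show ?thesis using riesz_lower_pos[OF phi_lower] by (simp add: mult_le_0_iff)
  qed
  finally show ?thesis by simp
qed

lemma minimising_sequence:
  obtains A where "\<And>k. admissible (A k)" "\<And>k. hs_dist (A k) < min_hs_dist + inverse (real (Suc k))"
proof -
  have "\<exists>\<alpha>. admissible \<alpha> \<and> hs_dist \<alpha> < min_hs_dist + inverse (real (Suc k))" for k
  proof -
    have "Inf (hs_dist ` Collect admissible) < min_hs_dist + inverse (real (Suc k))"
      by (simp add: min_hs_dist_def)
    moreover have "hs_dist ` Collect admissible \<noteq> {}" using admissible_zero by blast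
    ultimately show ?thesis using cInf_lessD[of "hs_dist ` Collect admissible"] by auto
  qed
  then obtain A where "\<forall>k. admissible (A k) \<and> hs_dist (A k) < min_hs_dist + inverse (real (Suc k))"
    using choice[of "\<lambda>k \<alpha>. admissible \<alpha> \<and> hs_dist \<alpha> < min_hs_dist + inverse (real (Suc k))"] by blast
  then show ?thesis using that by blast
qed

lemma hs_dist_le_of_approx:
  assumes a: "(\<lambda>n. (a n)\<^sup>2) summable_on K" and A: "\<And>k. (\<lambda>n. (A k n)\<^sup>2) summable_on K"
    and near_c: "\<And>k. hs_dist (A k) \<le> c + \<epsilon> k" and near_a: "\<And>k. infsum (\<lambda>n. (a n - A k n)\<^sup>2) K \<le> \<delta> k"
    and "\<epsilon> \<longlonglongrightarrow> 0" "\<delta> \<longlonglongrightarrow> 0" "c \<ge> 0"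
  shows "hs_dist a \<le> c"
proof (rule le_of_forall_le_one_plus_mult[OF \<open>c \<ge> 0\<close>])
  fix t :: real assume "t > 0"
  let ?R = "\<lambda>k. (1 + t) * (c + \<epsilon> k) + (1 + 1/t) * (Bphi * \<delta> k)"
  show "hs_dist a \<le> (1 + t) * c"
  proof (rule LIMSEQ_le_const)
    have "?R \<longlonglongrightarrow> (1 + t) * (c + 0) + (1 + 1/t) * (Bphi * 0)"
      by (intro tendsto_intros assms)
    then show "?R \<longlonglongrightarrow> (1 + t) * c" by simp
    have "hs_dist a \<le> ?R k" for k
    proof -
      have diff: "(\<lambda>n. (a n - A k n)\<^sup>2) summable_on K"
        using square_summable_lincomb[OF a A, of 1 "-1" k] by simp
      have "hs_dist a \<le> (1 + t) * hs_dist (A k) + (1 + 1/t) * hs_diag (\<lambda>n. a n - A k n)"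
        by (rule hs_dist_perturb[OF a A \<open>t > 0\<close>])
      also have "\<dots> \<le> ?R k"
      proof (intro add_mono mult_left_mono near_c)
        have "hs_diag (\<lambda>n. a n - A k n) \<le> Bphi * infsum (\<lambda>n. (a n - A k n)\<^sup>2) K"
          by (rule hs_diag_bounds(2)[OF diff])
        also have "\<dots> \<le> Bphi * \<delta> k"
          by (intro mult_left_mono near_a riesz_upper_nonneg[OF phi_upper])
        finally show "hs_diag (\<lambda>n. a n - A k n) \<le> Bphi * \<delta> k" .
      qed (use \<open>t > 0\<close> in auto)
      finally show ?thesis .
    qed
    then show "\<exists>N. \<forall>k\<ge>N. hs_dist a \<le> ?R k" by blast
  qed
qed

lemma admissible_minimiser_exists: "\<exists>\<alpha>. admissible \<alpha> \<and> hs_dist \<alpha> \<le> min_hs_dist"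
proof -
  obtain A where A: "\<And>k. admissible (A k)" "\<And>k. hs_dist (A k) < min_hs_dist + inverse (real (Suc k))"
    by (rule minimising_sequence, rule that)
  define \<epsilon> where "\<epsilon> k = inverse (real (Suc k))" for k
  note A = A[folded \<epsilon>_def]
  have "Aphi > 0" by (rule riesz_lower_pos[OF phi_lower])
  have A_summable: "\<And>k. (\<lambda>n. (A k n)\<^sup>2) summable_on K" using A(1) by (simp add: admissible_def)
  have A_Cauchy: "infsum (\<lambda>n. (A j n - A k n)\<^sup>2) K \<le> 2 / Aphi * \<epsilon> j + 2 / Aphi * \<epsilon> k" for j k
  proof -
    have "Aphi * infsum (\<lambda>n. (A j n - A k n)\<^sup>2) K \<le> 2 * (\<epsilon> j + \<epsilon> k)"
      using admissible_dist_le[OF A(1) A(1), of j k] A(2)[of j] A(2)[of k] by argo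
    then show ?thesis using \<open>Aphi > 0\<close> by (simp add: pos_le_divide_eq field_simps)
  qed
  have \<epsilon>_lim: "\<epsilon> \<longlonglongrightarrow> 0" and \<delta>_lim: "(\<lambda>k. 2 / Aphi * \<epsilon> k) \<longlonglongrightarrow> 0"
    unfolding \<epsilon>_def by (rule LIMSEQ_inverse_real_of_nat, rule tendsto_mult_right_zero[OF LIMSEQ_inverse_real_of_nat])
  obtain a where a: "\<And>n. n \<in> K \<Longrightarrow> (\<lambda>k. A k n) \<longlonglongrightarrow> a n"
    "\<And>k. (\<lambda>n. (a n - A k n)\<^sup>2) summable_on K" "\<And>k. infsum (\<lambda>n. (a n - A k n)\<^sup>2) K \<le> 2 / Aphi * \<epsilon> k"
    by (rule square_summable_Cauchy_limit[OF A_summable A_Cauchy \<delta>_lim], rule that)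
  have "admissible a"
  proof -
    have "-1 \<le> a n" if "n \<in> K" for n
    proof (rule LIMSEQ_le_const[OF a(1)[OF that]])
      show "\<exists>N. \<forall>k\<ge>N. -1 \<le> A k n" using A(1) that unfolding admissible_def by blast
    qed
    moreover have "(\<lambda>n. (1 * (a n - A 0 n) + 1 * A 0 n)\<^sup>2) summable_on K"
      by (intro square_summable_lincomb a(2) A_summable)
    ultimately show ?thesis by (simp add: admissible_def)
  qed
  moreover have "hs_dist a \<le> min_hs_dist"
  proof (rule hs_dist_le_of_approx[OF _ A_summable _ a(3) \<epsilon>_lim \<delta>_lim min_hs_dist_nonneg])
    show "(\<lambda>n. (a n)\<^sup>2) summable_on K" using \<open>admissible a\<close> by (simp add: admissible_def)
    show "hs_dist (A k) \<le> min_hs_dist + \<epsilon> k" for k using A(2)[of k] by (rule less_imp_le)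
  qed
  ultimately show ?thesis by blast
qed

lemma theta_op_cong: "(\<And>n. n \<in> K \<Longrightarrow> \<alpha> n = \<beta> n) \<Longrightarrow> theta_op K \<phi> \<alpha> = theta_op K \<phi> \<beta>"
  unfolding theta_op_def Ksum_def by (intro ext arg_cong[where f=lim] sum.cong) auto

lemma hs_norm_theta_le_iff:
  assumes "admissible \<alpha>" "admissible \<beta>"
  shows "hs_norm (\<lambda>x. theta_op K \<phi> \<alpha> x - x) \<le> hs_norm (\<lambda>x. theta_op K \<phi> \<beta> x - x) \<longleftrightarrow> hs_dist \<alpha> \<le> hs_dist \<beta>"
  using assms hs_dist_nonneg[of \<alpha>] hs_dist_nonneg[of \<beta>]
  by (simp add: admissible_def hs_norm_theta_minus_id)

theorem unique_hs_minimiser: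
  "\<exists>!\<Theta>. \<Theta> \<in> frakC K \<phi> \<and> (\<forall>\<Theta>'\<in>frakC K \<phi>. hs_norm (\<lambda>x. \<Theta> x - x) \<le> hs_norm (\<lambda>x. \<Theta>' x - x))"
proof -
  obtain \<alpha> where \<alpha>: "admissible \<alpha>" "hs_dist \<alpha> \<le> min_hs_dist"
    using admissible_minimiser_exists by blast
  show ?thesis
  proof (rule ex1I[of _ "theta_op K \<phi> \<alpha>"])
    show "theta_op K \<phi> \<alpha> \<in> frakC K \<phi> \<and>
        (\<forall>\<Theta>'\<in>frakC K \<phi>. hs_norm (\<lambda>x. theta_op K \<phi> \<alpha> x - x) \<le> hs_norm (\<lambda>x. \<Theta>' x - x))"
      unfolding frakC_eq using \<alpha> min_hs_dist_le by (auto simp: hs_norm_theta_le_iff intro: order_trans)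
  next
    fix \<Theta> assume \<Theta>: "\<Theta> \<in> frakC K \<phi> \<and> (\<forall>\<Theta>'\<in>frakC K \<phi>. hs_norm (\<lambda>x. \<Theta> x - x) \<le> hs_norm (\<lambda>x. \<Theta>' x - x))"
    then obtain \<beta> where \<beta>: "admissible \<beta>" "\<Theta> = theta_op K \<phi> \<beta>" unfolding frakC_eq by blast
    have "theta_op K \<phi> \<alpha> \<in> frakC K \<phi>" unfolding frakC_eq using \<alpha>(1) by blast
    with \<Theta> have "hs_norm (\<lambda>x. \<Theta> x - x) \<le> hs_norm (\<lambda>x. theta_op K \<phi> \<alpha> x - x)" by blast
    then have "hs_dist \<beta> \<le> hs_dist \<alpha>" unfolding \<beta>(2) hs_norm_theta_le_iff[OF \<beta>(1) \<alpha>(1)] .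
    then have "\<beta> n = \<alpha> n" if "n \<in> K" for n
      using admissible_minimisers_eq[OF \<beta>(1) \<alpha>(1) _ \<alpha>(2) that] \<alpha>(2) by simp
    then show "\<Theta> = theta_op K \<phi> \<alpha>" unfolding \<beta>(2) by (rule theta_op_cong)
  qed
qed

end

theorem proposition4p2:
  fixes D :: "'a::{complex_inner, complete_space} set"
    and h :: "'a \<Rightarrow> 'a"
    and K :: "nat set"
    and \<psi> \<omega> \<phi> :: "nat \<Rightarrow> 'a"
  assumes K: "(\<exists>N::nat. K = {1..N}) \<or> K = {1..}"
    and qsa: "quasi_self_adjoint D h"
    and real_spec: "op_spectrum D h \<subseteq> \<real>"
    and simple: "simple_spectrum D h"
    and discrete: "compact_resolvent D h"
    and psi_eig: "\<forall>n\<in>K. is_eigenvector D h (\<psi> n)"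
    and psi_basis: "is_basis K \<psi>"
    and chi_onb: "orthonormal_basis K \<omega>"
    and quad_close: "(\<lambda>n. (norm (\<psi> n - \<omega> n))\<^sup>2) summable_on K"
    and phi_eig: "\<forall>n\<in>K. is_eigenvector (adj_dom D h) (adj D h) (\<phi> n)"
    and biorth: "\<forall>m\<in>K. \<forall>n\<in>K. cinner (\<psi> m) (\<phi> n) = (if n = m then 1 else 0)"
    and phi_norm: "\<forall>n\<in>K. norm (\<phi> n) = 1"
  shows "\<exists>!\<Theta>. \<Theta> \<in> frakC K \<phi> \<and>
           (\<forall>\<Theta>'\<in>frakC K \<phi>. hs_norm (\<lambda>x. \<Theta> x - x) \<le> hs_norm (\<lambda>x. \<Theta>' x - x))"
proof -
  interpret bari_basis K \<psi> \<omega> \<phi>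
    by unfold_locales (use psi_basis chi_onb quad_close biorth phi_norm in \<open>auto simp: biorthogonal_def\<close>)
  show ?thesis by (rule unique_hs_minimiser)
qed

end
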